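(* Let $\Sigma_1,\Sigma_2$ be finite alphabets and $m\subseteq\Sigma_1^*\times\Sigma_2^*$ a string transduction. Then $\mathrm{nd}(m)$ is an mso definable graph transduction if and only if $\mathrm{ed}(m)$ is an mso definable graph transduction and $(\varepsilon,z)\in m$ implies $z=\varepsilon$.
   Context: Graphs over node alphabet $\Sigma$ and edge alphabet $\Gamma$ are triples $(V,E,\mathrm{lab})$, $E\subseteq V\times\Gamma\times V$, $\mathrm{lab}:V\to\Sigma$; $*$ denotes "unlabelled". $\mathrm{MSO}(\Sigma,\Gamma)$ is monadic second-order logic with node and node-set variables and atomic formulas $\mathrm{lab}_\sigma(x)$, $\mathrm{edge}_\gamma(x,y)$, $x=y$, $x\in X$. An mso definable graph transduction is a partial function given by a closed domain formula $\varphi_{\mathrm{dom}}$, a finite copy set $C$, node formulas $\varphi^c_\sigma(x)$ and edge formulas $\varphi^{c_1,c_2}_\gamma(x,y)$ over the input logic; on an input $g\models\varphi_{\mathrm{dom}}$ the output has nodes $(u,c)$ for which exactly one $\sigma$ satisfies $g\models\varphi^c_\sigma(u)$ (labelled $\sigma$), and edges $((u,c_1),\gamma,(v,c_2))$ between such nodes iff $g\models\varphi^{c_1,c_2}_\gamma(u,v)$. For $w$ of length $k$: $\mathrm{nd}(w)$ has $k$ nodes labelled by the letters of $w$ with $k-1$ unlabelled successor edges ($\mathrm{nd}(\varepsilon)$ is empty); $\mathrm{ed}(w)$ has $k+1$ unlabelled nodes forming a path whose $k$ edges are labelled by the letters of $w$. For a transduction $m$, $\mathrm{nd}(m)=\{(\mathrm{nd}(w),\mathrm{nd}(z))\mid(w,z)\in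 m\}$ and $\mathrm{ed}(m)=\{(\mathrm{ed}(w),\mathrm{ed}(z))\mid(w,z)\in m\}$. *)

theory Defs
  imports Main
begin

text \<open>A graph with node set of type 'v, node labels of type 'l (the node alphabet)
  and edge labels of type 'e (the edge alphabet).  The label "unlabelled" is
  modelled by the one-element type unit.\<close>

record ('v, 'l, 'e) graph =
  nodes :: "'v set"
  edges :: "('v \<times> 'e \<times> 'v) set"
  lab   :: "'v \<Rightarrow> 'l"

definition wf_graph :: "('v, 'l, 'e) graph \<Rightarrow> bool" where
  "wf_graph g \<longleftrightarrow> finite (nodes g) \<and> edges g \<subseteq> nodes g \<times> UNIV \<times> nodes g"

definition graph_iso :: "('v, 'l, 'e) graph \<Rightarrow> ('w, 'l, 'e) graph \<Rightarrow> bool" where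
  "graph_iso g h \<longleftrightarrow> (\<exists>f. bij_betw f (nodes g) (nodes h)
      \<and> (\<forall>v\<in>nodes g. lab h (f v) = lab g v)
      \<and> (\<forall>u\<in>nodes g. \<forall>v\<in>nodes g. \<forall>e. (u, e, v) \<in> edges g \<longleftrightarrow> (f u, e, f v) \<in> edges h))"

text \<open>First-order (node) variables and second-order (node-set) variables are
  both indexed by natural numbers, in separate name spaces.\<close>

datatype ('l, 'e) mso =
    Lab 'l nat
  | Edg 'e nat nat
  | Eq nat nat
  | In nat nat
  | Neg "('l, 'e) mso"
  | Conj "('l, 'e) mso" "('l, 'e) mso"
  | Ex1 nat "('l, 'e) mso"
  | Ex2 nat "('l, 'e) mso"

fun fv1 :: "('l, 'e) mso \<Rightarrow> nat set" where
  "fv1 (Lab s x) = {x}"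
| "fv1 (Edg e x y) = {x, y}"
| "fv1 (Eq x y) = {x, y}"
| "fv1 (In x X) = {x}"
| "fv1 (Neg p) = fv1 p"
| "fv1 (Conj p q) = fv1 p \<union> fv1 q"
| "fv1 (Ex1 x p) = fv1 p - {x}"
| "fv1 (Ex2 X p) = fv1 p"

fun fv2 :: "('l, 'e) mso \<Rightarrow> nat set" where
  "fv2 (Lab s x) = {}"
| "fv2 (Edg e x y) = {}"
| "fv2 (Eq x y) = {}"
| "fv2 (In x X) = {X}"
| "fv2 (Neg p) = fv2 p"
| "fv2 (Conj p q) = fv2 p \<union> fv2 q"
| "fv2 (Ex1 x p) = fv2 p"
| "fv2 (Ex2 X p) = fv2 p - {X}"

fun sat :: "('v, 'l, 'e) graph \<Rightarrow> (nat \<Rightarrow> 'v) \<Rightarrow> (nat \<Rightarrow> 'v set) \<Rightarrow> ('l, 'e) mso \<Rightarrow> bool" where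
  "sat g I S (Lab s x) \<longleftrightarrow> lab g (I x) = s"
| "sat g I S (Edg e x y) \<longleftrightarrow> (I x, e, I y) \<in> edges g"
| "sat g I S (Eq x y) \<longleftrightarrow> I x = I y"
| "sat g I S (In x X) \<longleftrightarrow> I x \<in> S X"
| "sat g I S (Neg p) \<longleftrightarrow> \<not> sat g I S p"
| "sat g I S (Conj p q) \<longleftrightarrow> sat g I S p \<and> sat g I S q"
| "sat g I S (Ex1 x p) \<longleftrightarrow> (\<exists>v\<in>nodes g. sat g (I(x := v)) S p)"
| "sat g I S (Ex2 X p) \<longleftrightarrow> (\<exists>V. V \<subseteq> nodes g \<and> sat g I (S(X := V)) p)"

text \<open>Closed formulas; node formulas phi(x) with x = variable 0;
  edge formulas phi(x,y) with x = variable 0, y = variable 1.\<close>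

definition closed :: "('l, 'e) mso \<Rightarrow> bool" where
  "closed p \<longleftrightarrow> fv1 p = {} \<and> fv2 p = {}"

definition sat0 :: "('v, 'l, 'e) graph \<Rightarrow> ('l, 'e) mso \<Rightarrow> bool" where
  "sat0 g p \<longleftrightarrow> (\<exists>I. sat g I (\<lambda>_. {}) p)"

definition sat1 :: "('v, 'l, 'e) graph \<Rightarrow> ('l, 'e) mso \<Rightarrow> 'v \<Rightarrow> bool" where
  "sat1 g p u \<longleftrightarrow> sat g (\<lambda>_. u) (\<lambda>_. {}) p"

definition sat2 :: "('v, 'l, 'e) graph \<Rightarrow> ('l, 'e) mso \<Rightarrow> 'v \<Rightarrow> 'v \<Rightarrow> bool" where
  "sat2 g p u v \<longleftrightarrow> sat g (\<lambda>i. if i = 0 then u else v) (\<lambda>_. {}) p"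

record ('l1, 'e1, 'l2, 'e2) mso_trans =
  tdom   :: "('l1, 'e1) mso"
  copies :: "nat set"
  nform  :: "nat \<Rightarrow> 'l2 \<Rightarrow> ('l1, 'e1) mso"
  eform  :: "nat \<Rightarrow> nat \<Rightarrow> 'e2 \<Rightarrow> ('l1, 'e1) mso"

definition wf_trans :: "('l1, 'e1, 'l2, 'e2) mso_trans \<Rightarrow> bool" where
  "wf_trans T \<longleftrightarrow> closed (tdom T) \<and> finite (copies T)
     \<and> (\<forall>c s. fv1 (nform T c s) \<subseteq> {0} \<and> fv2 (nform T c s) = {})
     \<and> (\<forall>c1 c2 e. fv1 (eform T c1 c2 e) \<subseteq> {0, 1} \<and> fv2 (eform T c1 c2 e) = {})"

definition out_nodes :: "('l1, 'e1, 'l2, 'e2) mso_trans \<Rightarrow> ('v, 'l1, 'e1) graph \<Rightarrow> ('v \<times> nat) set" where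
  "out_nodes T g = {(u, c). u \<in> nodes g \<and> c \<in> copies T \<and> (\<exists>!s. sat1 g (nform T c s) u)}"

definition apply_trans :: "('l1, 'e1, 'l2, 'e2) mso_trans \<Rightarrow> ('v, 'l1, 'e1) graph \<Rightarrow> ('v \<times> nat, 'l2, 'e2) graph" where
  "apply_trans T g =
     \<lparr> nodes = out_nodes T g,
       edges = {((u, c1), e, (v, c2)). (u, c1) \<in> out_nodes T g \<and> (v, c2) \<in> out_nodes T g
                  \<and> sat2 g (eform T c1 c2 e) u v},
       lab = (\<lambda>(u, c). THE s. sat1 g (nform T c s) u) \<rparr>"

text \<open>A relation R between (concrete representatives of) graphs is an MSO definable
  graph transduction if some MSO transduction T realises it up to isomorphism:
  a (finite) input graph is in the domain of T iff it is isomorphic to the first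
  component of a pair in R, and then the output of T is isomorphic to every
  corresponding second component (so R is in particular functional up to
  isomorphism).  Input graphs are taken w.l.o.g. with nodes in nat.\<close>

definition mso_definable :: "(('v, 'l1, 'e1) graph \<times> ('w, 'l2, 'e2) graph) set \<Rightarrow> bool" where
  "mso_definable R \<longleftrightarrow> (\<exists>T :: ('l1, 'e1, 'l2, 'e2) mso_trans. wf_trans T \<and>
     (\<forall>g :: (nat, 'l1, 'e1) graph. wf_graph g \<longrightarrow>
        (sat0 g (tdom T) \<longleftrightarrow> (\<exists>(g0, h) \<in> R. graph_iso g g0))
      \<and> (\<forall>(g0, h) \<in> R. graph_iso g g0 \<longrightarrow> graph_iso (apply_trans T g) h)))"

definition nd :: "'a list \<Rightarrow> (nat, 'a, unit) graph" where
  "nd w = \<lparr> nodes = {0..<length w},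
            edges = {(i, (), Suc i) | i. Suc i < length w},
            lab = (\<lambda>i. w ! i) \<rparr>"

definition ed :: "'a list \<Rightarrow> (nat, unit, 'a) graph" where
  "ed w = \<lparr> nodes = {0..length w},
            edges = {(i, w ! i, Suc i) | i. i < length w},
            lab = (\<lambda>_. ()) \<rparr>"

definition nd_rel :: "('a list \<times> 'b list) set \<Rightarrow> ((nat, 'a, unit) graph \<times> (nat, 'b, unit) graph) set" where
  "nd_rel m = {(nd w, nd z) | w z. (w, z) \<in> m}"

definition ed_rel :: "('a list \<times> 'b list) set \<Rightarrow> ((nat, unit, 'a) graph \<times> (nat, unit, 'b) graph) set" where
  "ed_rel m = {(ed w, ed z) | w z. (w, z) \<in> m}"

end

theory Submission
  imports Defs
begin

text \<open>
  The two encodings of a word are related by simple graph operations: \<open>nd w\<close> is obtained from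
  \<open>ed w\<close> by moving every edge label onto the source of the edge and deleting the last node
  (\<open>nd_of_ed\<close>), and \<open>ed w\<close> from \<open>nd w\<close> by adding a fresh end node and moving every node
  label onto the outgoing edge of the node (\<open>ed_of_nd\<close>). Each direction simulates a given
  transduction on the other encoding. From node to edge labels, the formulas are relativised
  to nodes with an outgoing edge, so that they are evaluated on \<open>nd_of_ed g\<close>, and one extra copy
  of the last node of \<open>g\<close> becomes the end node of the output, which is then literally
  \<open>ed_of_nd\<close> of the simulated output. From edge to node labels, the fresh end node \<open>t\<close> is
  eliminated from the formulas by recording which variables denote \<open>t\<close>; copy \<open>c\<close> of \<open>t\<close> is carried
  by copy \<open>2c + 1\<close> of the last node, and the output is isomorphic to \<open>nd_of_ed\<close> of the simulated
  output. Only this last step needs a last node, i.e. a nonempty input word; the empty word is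
  covered by the side condition, which is also necessary because a transduction maps the empty
  graph \<open>nd []\<close> to an empty graph.
\<close>

definition FF :: "('l, 'e) mso" where "FF = Ex1 0 (Neg (Eq 0 0))"
definition TT :: "('l, 'e) mso" where "TT = Neg FF"
definition Disj :: "('l, 'e) mso \<Rightarrow> ('l, 'e) mso \<Rightarrow> ('l, 'e) mso" where
  "Disj p q = Neg (Conj (Neg p) (Neg q))"
definition Imp :: "('l, 'e) mso \<Rightarrow> ('l, 'e) mso \<Rightarrow> ('l, 'e) mso" where
  "Imp p q = Neg (Conj p (Neg q))"
definition All1 :: "nat \<Rightarrow> ('l, 'e) mso \<Rightarrow> ('l, 'e) mso" where
  "All1 x p = Neg (Ex1 x (Neg p))"

fun Big_Disj :: "('l, 'e) mso list \<Rightarrow> ('l, 'e) mso" where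
  "Big_Disj [] = FF"
| "Big_Disj (p # ps) = Disj p (Big_Disj ps)"

fun Big_Conj :: "('l, 'e) mso list \<Rightarrow> ('l, 'e) mso" where
  "Big_Conj [] = TT"
| "Big_Conj (p # ps) = Conj p (Big_Conj ps)"

lemma sat_FF [simp]: "\<not> sat g I S FF"
  by (simp add: FF_def)

lemma sat_TT [simp]: "sat g I S TT"
  by (simp add: TT_def)

lemma sat_Disj [simp]: "sat g I S (Disj p q) \<longleftrightarrow> sat g I S p \<or> sat g I S q"
  by (simp add: Disj_def)

lemma sat_Imp [simp]: "sat g I S (Imp p q) \<longleftrightarrow> (sat g I S p \<longrightarrow> sat g I S q)"
  by (simp add: Imp_def)

lemma sat_All1 [simp]: "sat g I S (All1 x p) \<longleftrightarrow> (\<forall>v\<in>nodes g. sat g (I(x := v)) S p)"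
  by (simp add: All1_def)

lemma sat_Big_Disj [simp]: "sat g I S (Big_Disj ps) \<longleftrightarrow> (\<exists>p\<in>set ps. sat g I S p)"
  by (induction ps) auto

lemma sat_Big_Conj [simp]: "sat g I S (Big_Conj ps) \<longleftrightarrow> (\<forall>p\<in>set ps. sat g I S p)"
  by (induction ps) auto

lemma fv_FF [simp]: "fv1 FF = {}" "fv2 FF = {}"
  by (auto simp: FF_def)

lemma fv_TT [simp]: "fv1 TT = {}" "fv2 TT = {}"
  by (auto simp: TT_def)

lemma fv_Disj [simp]: "fv1 (Disj p q) = fv1 p \<union> fv1 q" "fv2 (Disj p q) = fv2 p \<union> fv2 q"
  by (auto simp: Disj_def)

lemma fv_Imp [simp]: "fv1 (Imp p q) = fv1 p \<union> fv1 q" "fv2 (Imp p q) = fv2 p \<union> fv2 q"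
  by (auto simp: Imp_def)

lemma fv_All1 [simp]: "fv1 (All1 x p) = fv1 p - {x}" "fv2 (All1 x p) = fv2 p"
  by (auto simp: All1_def)

lemma fv_Big_Disj [simp]:
  "fv1 (Big_Disj ps) = (\<Union>p\<in>set ps. fv1 p)" "fv2 (Big_Disj ps) = (\<Union>p\<in>set ps. fv2 p)"
  by (induction ps) auto

lemma fv_Big_Conj [simp]:
  "fv1 (Big_Conj ps) = (\<Union>p\<in>set ps. fv1 p)" "fv2 (Big_Conj ps) = (\<Union>p\<in>set ps. fv2 p)"
  by (induction ps) auto

definition univ_list :: "'a::finite list" where
  "univ_list = (SOME xs. set xs = UNIV)"

lemma set_univ_list [simp]: "set (univ_list :: 'a::finite list) = UNIV"
  unfolding univ_list_def by (rule someI_ex) (rule finite_list, simp)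

lemma sat_cong:
  assumes "\<forall>x\<in>fv1 p. I x = I' x" and "\<forall>X\<in>fv2 p. S X = S' X"
  shows "sat g I S p \<longleftrightarrow> sat g I' S' p"
  using assms
proof (induction p arbitrary: I I' S S')
  case (Conj p q)
  have "sat g I S p \<longleftrightarrow> sat g I' S' p" "sat g I S q \<longleftrightarrow> sat g I' S' q"
    by (rule Conj.IH; use Conj.prems in auto)+
  then show ?case by simp
next
  case (Ex1 x p)
  have "sat g (I(x := v)) S p \<longleftrightarrow> sat g (I'(x := v)) S' p" for v
    by (rule Ex1.IH) (use Ex1.prems in auto)
  then show ?case by simp
next
  case (Ex2 X p)
  have "sat g I (S(X := V)) p \<longleftrightarrow> sat g I' (S'(X := V)) p" for V
    by (rule Ex2.IH) (use Ex2.prems in auto)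
  then show ?case by simp
qed auto

lemma sat_eq_sat1:
  assumes "fv1 p \<subseteq> {0}" and "fv2 p = {}"
  shows "sat g I S p \<longleftrightarrow> sat1 g p (I 0)"
  unfolding sat1_def by (rule sat_cong) (use assms in auto)

lemma sat_eq_sat2:
  assumes "fv1 p \<subseteq> {0, 1}" and "fv2 p = {}"
  shows "sat g I S p \<longleftrightarrow> sat2 g p (I 0) (I 1)"
  unfolding sat2_def by (rule sat_cong) (use assms in auto)

lemma sat1_Neg [simp]: "sat1 g (Neg p) u \<longleftrightarrow> \<not> sat1 g p u"
  by (simp add: sat1_def)

lemma sat1_Conj [simp]: "sat1 g (Conj p q) u \<longleftrightarrow> sat1 g p u \<and> sat1 g q u"
  by (simp add: sat1_def)

lemma sat2_FF [simp]: "\<not> sat2 g FF u v"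
  by (simp add: sat2_def)

lemma sat2_Neg [simp]: "sat2 g (Neg p) u v \<longleftrightarrow> \<not> sat2 g p u v"
  by (simp add: sat2_def)

lemma sat2_Conj [simp]: "sat2 g (Conj p q) u v \<longleftrightarrow> sat2 g p u v \<and> sat2 g q u v"
  by (simp add: sat2_def)

lemma sat2_eq_sat1:
  assumes "fv1 p \<subseteq> {0}" and "fv2 p = {}"
  shows "sat2 g p u v \<longleftrightarrow> sat1 g p u"
  unfolding sat2_def using assms by (simp add: sat_eq_sat1)

lemma sat0_iff_sat:
  assumes "closed p"
  shows "sat0 g p \<longleftrightarrow> sat g I (\<lambda>_. {}) p"
  using assms sat_cong[of p _ I "\<lambda>_. {}" "\<lambda>_. {}" g]
  by (auto simp: sat0_def closed_def)

definition Ex_Unique :: "('s::finite \<Rightarrow> ('l, 'e) mso) \<Rightarrow> ('l, 'e) mso" where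
  "Ex_Unique f = Big_Disj [Conj (f s) (Big_Conj [Neg (f s'). s' \<leftarrow> univ_list, s' \<noteq> s]). s \<leftarrow> univ_list]"

lemma sat_Ex_Unique: "sat g I S (Ex_Unique f) \<longleftrightarrow> (\<exists>!s. sat g I S (f s))"
  unfolding Ex_Unique_def by auto metis

lemma fv_Ex_Unique: "fv1 (Ex_Unique f) \<subseteq> (\<Union>s. fv1 (f s))" "fv2 (Ex_Unique f) \<subseteq> (\<Union>s. fv2 (f s))"
  unfolding Ex_Unique_def by auto

lemma wf_trans_nformD: "wf_trans T \<Longrightarrow> fv1 (nform T c s) \<subseteq> {0} \<and> fv2 (nform T c s) = {}"
  unfolding wf_trans_def by blast

lemma wf_trans_eformD:
  "wf_trans T \<Longrightarrow> fv1 (eform T c1 c2 e) \<subseteq> {0, 1} \<and> fv2 (eform T c1 c2 e) = {}"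
  unfolding wf_trans_def by blast

lemma out_nodes_iff:
  "(u, c) \<in> out_nodes T g \<longleftrightarrow> u \<in> nodes g \<and> c \<in> copies T \<and> (\<exists>!s. sat1 g (nform T c s) u)"
  by (simp add: out_nodes_def)

lemma nodes_apply_trans [simp]: "nodes (apply_trans T g) = out_nodes T g"
  by (simp add: apply_trans_def)

lemma edges_apply_trans_iff:
  "((u, c1), e, (v, c2)) \<in> edges (apply_trans T g) \<longleftrightarrow>
     (u, c1) \<in> out_nodes T g \<and> (v, c2) \<in> out_nodes T g \<and> sat2 g (eform T c1 c2 e) u v"
  by (simp add: apply_trans_def)

lemma lab_apply_trans_iff:
  assumes "(u, c) \<in> out_nodes T g"
  shows "lab (apply_trans T g) (u, c) = s \<longleftrightarrow> sat1 g (nform T c s) u"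
proof -
  have "\<exists>!s. sat1 g (nform T c s) u"
    using assms by (simp add: out_nodes_iff)
  then show ?thesis
    unfolding apply_trans_def by (auto intro: theI' the1_equality)
qed

lemma Ex1_unit_iff: "(\<exists>!x :: unit. P x) \<longleftrightarrow> P ()"
  by (metis (full_types) old.unit.exhaust)

lemma out_nodes_empty: "nodes g = {} \<Longrightarrow> out_nodes T g = {}"
  by (simp add: out_nodes_def)

lemma wf_apply_trans:
  assumes "wf_graph g" and "wf_trans T"
  shows "wf_graph (apply_trans T g)"
proof -
  have "out_nodes T g \<subseteq> nodes g \<times> copies T"
    by (auto simp: out_nodes_def)
  then have "finite (out_nodes T g)"
    using assms by (auto simp: wf_graph_def wf_trans_def intro: finite_subset)
  then show ?thesis
    unfolding wf_graph_def by (auto simp: apply_trans_def)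
qed

definition copy_list :: "('l1, 'e1, 'l2, 'e2) mso_trans \<Rightarrow> nat list" where
  "copy_list T = sorted_list_of_set (copies T)"

lemma set_copy_list: "wf_trans T \<Longrightarrow> set (copy_list T) = copies T"
  unfolding copy_list_def wf_trans_def by simp

definition Out_Node :: "('l1::finite, 'e1, 'l2::finite, 'e2) mso_trans \<Rightarrow> nat \<Rightarrow> ('l1, 'e1) mso" where
  "Out_Node T c = Ex_Unique (nform T c)"

lemma fv_Out_Node: "wf_trans T \<Longrightarrow> fv1 (Out_Node T c) \<subseteq> {0} \<and> fv2 (Out_Node T c) = {}"
  unfolding Out_Node_def using fv_Ex_Unique[of "nform T c"] wf_trans_nformD[of T c]
  by blast

lemma sat_Out_Node:
  assumes "wf_trans T"
  shows "sat g I S (Out_Node T c) \<longleftrightarrow> (\<exists>!s. sat1 g (nform T c s) (I 0))"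
  using assms unfolding Out_Node_def by (simp add: sat_Ex_Unique sat_eq_sat1 wf_trans_nformD)

definition Out_Edge :: "('l1::finite, 'e1, 'l2::finite, 'e2) mso_trans \<Rightarrow> nat \<Rightarrow> 'e2 \<Rightarrow> ('l1, 'e1) mso" where
  "Out_Edge T c e =
     Ex1 1 (Big_Disj (map (\<lambda>c'. Conj (eform T c c' e) (Ex1 0 (Conj (Eq 0 1) (Out_Node T c'))))
                          (copy_list T)))"

lemma fv_Out_Edge: "wf_trans T \<Longrightarrow> fv1 (Out_Edge T c e) \<subseteq> {0} \<and> fv2 (Out_Edge T c e) = {}"
  unfolding Out_Edge_def using wf_trans_eformD fv_Out_Node by fastforce

lemma sat1_Out_Edge:
  assumes T: "wf_trans T" and u: "(u, c) \<in> out_nodes T g"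
  shows "sat1 g (Out_Edge T c e) u \<longleftrightarrow> (\<exists>b. ((u, c), e, b) \<in> edges (apply_trans T g))"
proof -
  have "sat g ((\<lambda>_. u)(1 := v)) (\<lambda>_. {}) (eform T c c' e) \<longleftrightarrow> sat2 g (eform T c c' e) u v" for v c'
    using sat_eq_sat2[of "eform T c c' e" g "(\<lambda>_. u)(1 := v)"] wf_trans_eformD[OF T] by simp
  then have "sat1 g (Out_Edge T c e) u \<longleftrightarrow>
      (\<exists>v c'. (v, c') \<in> out_nodes T g \<and> sat2 g (eform T c c' e) u v)"
    using T unfolding out_nodes_iff
    by (simp add: Out_Edge_def sat1_def sat_Out_Node set_copy_list) blast
  then show ?thesis
    using u by (auto simp: edges_apply_trans_iff)
qed

definition Out_Label :: "('l1::finite, 'e1, 'l2::finite, 'e2) mso_trans \<Rightarrow> nat \<Rightarrow> 'e2 \<Rightarrow> ('l1, 'e1) mso" where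
  "Out_Label T c e = Conj (Out_Node T c) (Out_Edge T c e)"

lemma fv_Out_Label: "wf_trans T \<Longrightarrow> fv1 (Out_Label T c e) \<subseteq> {0} \<and> fv2 (Out_Label T c e) = {}"
  unfolding Out_Label_def using fv_Out_Node fv_Out_Edge by fastforce

lemma sat1_Out_Label:
  assumes T: "wf_trans T" and u: "u \<in> nodes g" and c: "c \<in> copies T"
  shows "sat1 g (Out_Label T c e) u \<longleftrightarrow> (\<exists>b. ((u, c), e, b) \<in> edges (apply_trans T g))"
proof -
  have "sat1 g (Out_Node T c) u \<longleftrightarrow> (u, c) \<in> out_nodes T g"
    using u c by (simp add: sat1_def sat_Out_Node[OF T] out_nodes_iff)
  moreover have "(u, c) \<in> out_nodes T g" if "((u, c), e, b) \<in> edges (apply_trans T g)" for b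
    using that by (cases b) (simp add: edges_apply_trans_iff)
  ultimately show ?thesis
    unfolding Out_Label_def using sat1_Out_Edge[OF T, of u c g e] by auto
qed

lemma graph_iso_refl: "graph_iso g g"
  unfolding graph_iso_def by (rule exI[of _ id]) auto

lemma graph_iso_sym: "graph_iso g h \<Longrightarrow> graph_iso h g"
  unfolding graph_iso_def
proof (elim exE conjE)
  fix f assume f: "bij_betw f (nodes g) (nodes h)"
    and lab: "\<forall>v\<in>nodes g. lab h (f v) = lab g v"
    and edges: "\<forall>u\<in>nodes g. \<forall>v\<in>nodes g. \<forall>e. (u, e, v) \<in> edges g \<longleftrightarrow> (f u, e, f v) \<in> edges h"
  define f' where "f' = inv_into (nodes g) f"
  have f': "bij_betw f' (nodes h) (nodes g)"
    unfolding f'_def using f by (rule bij_betw_inv_into)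
  have inv: "f' v \<in> nodes g" "f (f' v) = v" if "v \<in> nodes h" for v
    using that f unfolding f'_def by (auto simp: bij_betw_def inv_into_into f_inv_into_f)
  show "\<exists>f'. bij_betw f' (nodes h) (nodes g) \<and>
      (\<forall>v\<in>nodes h. lab g (f' v) = lab h v) \<and>
      (\<forall>u\<in>nodes h. \<forall>v\<in>nodes h. \<forall>e. (u, e, v) \<in> edges h \<longleftrightarrow> (f' u, e, f' v) \<in> edges g)"
  proof (intro exI[of _ f'] conjI ballI allI)
    show "lab g (f' v) = lab h v" if "v \<in> nodes h" for v
      using that lab inv by metis
    show "(u, e, v) \<in> edges h \<longleftrightarrow> (f' u, e, f' v) \<in> edges g" if "u \<in> nodes h" "v \<in> nodes h" for u v e
      using that edges inv by metis
  qed (rule f')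
qed

lemma graph_iso_trans: "graph_iso g h \<Longrightarrow> graph_iso h k \<Longrightarrow> graph_iso g k"
  unfolding graph_iso_def
proof (elim exE conjE)
  fix f f' assume "bij_betw f (nodes g) (nodes h)" "bij_betw f' (nodes h) (nodes k)"
    and "\<forall>v\<in>nodes g. lab h (f v) = lab g v" "\<forall>v\<in>nodes h. lab k (f' v) = lab h v"
    and "\<forall>u\<in>nodes g. \<forall>v\<in>nodes g. \<forall>e. (u, e, v) \<in> edges g \<longleftrightarrow> (f u, e, f v) \<in> edges h"
    and "\<forall>u\<in>nodes h. \<forall>v\<in>nodes h. \<forall>e. (u, e, v) \<in> edges h \<longleftrightarrow> (f' u, e, f' v) \<in> edges k"
  then show "\<exists>f''. bij_betw f'' (nodes g) (nodes k) \<and>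
      (\<forall>v\<in>nodes g. lab k (f'' v) = lab g v) \<and>
      (\<forall>u\<in>nodes g. \<forall>v\<in>nodes g. \<forall>e. (u, e, v) \<in> edges g \<longleftrightarrow> (f'' u, e, f'' v) \<in> edges k)"
    by (intro exI[of _ "f' \<circ> f"]) (auto simp: bij_betw_trans bij_betw_apply)
qed

section \<open>String graphs\<close>

definition has_out :: "('v, 'l, 'e) graph \<Rightarrow> 'v \<Rightarrow> bool" where
  "has_out g u \<longleftrightarrow> (\<exists>e v. (u, e, v) \<in> edges g)"

definition out_unique :: "('v, 'l, 'e) graph \<Rightarrow> bool" where
  "out_unique g \<longleftrightarrow>
     (\<forall>u e v e' v'. (u, e, v) \<in> edges g \<longrightarrow> (u, e', v') \<in> edges g \<longrightarrow> e = e' \<and> v = v')"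

definition path_shaped :: "('v, 'l, 'e) graph \<Rightarrow> bool" where
  "path_shaped g \<longleftrightarrow> (\<exists>!t. t \<in> nodes g \<and> \<not> has_out g t) \<and> out_unique g"

lemma wf_graph_edgeD: "wf_graph g \<Longrightarrow> (u, e, v) \<in> edges g \<Longrightarrow> u \<in> nodes g \<and> v \<in> nodes g"
  unfolding wf_graph_def by auto

lemma out_uniqueD: "out_unique g \<Longrightarrow> (u, e, v) \<in> edges g \<Longrightarrow> (u, e', v') \<in> edges g \<Longrightarrow> e = e' \<and> v = v'"
  unfolding out_unique_def by blast

definition Has_Out :: "nat \<Rightarrow> ('l, 'a::finite) mso" where
  "Has_Out x = Ex1 (Suc x) (Big_Disj (map (\<lambda>e. Edg e x (Suc x)) univ_list))"

lemma fv_Has_Out [simp]: "fv1 (Has_Out x) = {x}" "fv2 (Has_Out x) = {}"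
  by (auto simp: Has_Out_def)

lemma sat_Has_Out: "wf_graph g \<Longrightarrow> sat g I S (Has_Out x) \<longleftrightarrow> has_out g (I x)"
  unfolding Has_Out_def has_out_def by (auto dest: wf_graph_edgeD)

lemma sat1_Has_Out: "wf_graph g \<Longrightarrow> sat1 g (Has_Out 0) u \<longleftrightarrow> has_out g u"
  by (simp add: sat1_def sat_Has_Out)

lemma sat2_Has_Out:
  "wf_graph g \<Longrightarrow> sat2 g (Has_Out 0) u v \<longleftrightarrow> has_out g u"
  "wf_graph g \<Longrightarrow> sat2 g (Has_Out (Suc 0)) u v \<longleftrightarrow> has_out g v"
  by (simp_all add: sat2_def sat_Has_Out)

lemma wf_nd: "wf_graph (nd w)"
  unfolding wf_graph_def nd_def by auto

lemma bij_betw_fun_upd_insert: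
  fixes n :: nat
  assumes "bij_betw f A {0..<n}" and "t \<notin> A"
  shows "bij_betw (f(t := n)) (insert t A) {0..n}"
proof -
  have "bij_betw (f(t := n)) A {0..<n}"
    using assms by (metis bij_betw_cong fun_upd_other)
  then have "bij_betw (f(t := n)) (A \<union> {t}) ({0..<n} \<union> {(f(t := n)) t})"
    using assms(2) by (intro notIn_Un_bij_betw) auto
  moreover have "{0..<n} \<union> {(f(t := n)) t} = {0..n}"
    by auto
  ultimately show ?thesis
    by simp
qed

definition nd_of_ed :: "('v, 'l, 'a) graph \<Rightarrow> ('v, 'a, unit) graph" where
  "nd_of_ed g =
     \<lparr> nodes = {u \<in> nodes g. has_out g u},
       edges = {(u, (), v) | u v. has_out g u \<and> has_out g v \<and> (\<exists>e. (u, e, v) \<in> edges g)},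
       lab = (\<lambda>u. THE e. \<exists>v. (u, e, v) \<in> edges g) \<rparr>"

definition ed_of_nd :: "'v \<Rightarrow> ('v, 'a, unit) graph \<Rightarrow> ('v, unit, 'a) graph" where
  "ed_of_nd t g =
     \<lparr> nodes = insert t (nodes g),
       edges = {(u, lab g u, v) | u v. (u, (), v) \<in> edges g}
               \<union> {(u, lab g u, t) | u. u \<in> nodes g \<and> \<not> has_out g u},
       lab = (\<lambda>_. ()) \<rparr>"

lemma nodes_nd_of_ed [simp]: "nodes (nd_of_ed g) = {u \<in> nodes g. has_out g u}"
  by (simp add: nd_of_ed_def)

lemma edges_nd_of_ed_iff:
  "(u, e, v) \<in> edges (nd_of_ed g) \<longleftrightarrow> has_out g u \<and> has_out g v \<and> (\<exists>e'. (u, e', v) \<in> edges g)"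
  by (simp add: nd_of_ed_def)

lemma lab_nd_of_ed: "out_unique g \<Longrightarrow> (u, e, v) \<in> edges g \<Longrightarrow> lab (nd_of_ed g) u = e"
  unfolding nd_of_ed_def out_unique_def by (auto intro!: the_equality)

lemma wf_nd_of_ed: "wf_graph g \<Longrightarrow> wf_graph (nd_of_ed g)"
  unfolding wf_graph_def nd_of_ed_def has_out_def by (auto elim: finite_subset[rotated])

lemma nodes_ed_of_nd [simp]: "nodes (ed_of_nd t g) = insert t (nodes g)"
  by (simp add: ed_of_nd_def)

lemma edges_ed_of_nd_iff:
  "(u, e, v) \<in> edges (ed_of_nd t g) \<longleftrightarrow>
     e = lab g u \<and> ((u, (), v) \<in> edges g \<or> v = t \<and> u \<in> nodes g \<and> \<not> has_out g u)"
  unfolding ed_of_nd_def by auto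

lemma wf_ed_of_nd: "wf_graph g \<Longrightarrow> wf_graph (ed_of_nd t g)"
  unfolding wf_graph_def by (auto simp: edges_ed_of_nd_iff)

locale nd_enum =
  fixes g :: "('v, 'a, unit) graph" and w :: "'a list" and f :: "'v \<Rightarrow> nat"
  assumes wf: "wf_graph g"
    and bij: "bij_betw f (nodes g) {0..<length w}"
    and lab: "\<And>v. v \<in> nodes g \<Longrightarrow> w ! f v = lab g v"
    and edge_iff: "\<And>u v e. u \<in> nodes g \<Longrightarrow> v \<in> nodes g \<Longrightarrow>
      (u, e, v) \<in> edges g \<longleftrightarrow> f v = Suc (f u) \<and> Suc (f u) < length w"

lemma graph_iso_nd_iff: "wf_graph g \<Longrightarrow> graph_iso g (nd w) \<longleftrightarrow> (\<exists>f. nd_enum g w f)"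
  unfolding graph_iso_def nd_enum_def nd_def by auto

locale ed_enum =
  fixes g :: "('v, unit, 'a) graph" and w :: "'a list" and f :: "'v \<Rightarrow> nat"
  assumes wf: "wf_graph g"
    and bij: "bij_betw f (nodes g) {0..length w}"
    and edge_iff: "\<And>u v e. u \<in> nodes g \<Longrightarrow> v \<in> nodes g \<Longrightarrow>
      (u, e, v) \<in> edges g \<longleftrightarrow> f v = Suc (f u) \<and> f u < length w \<and> e = w ! f u"

lemma graph_iso_ed_iff: "wf_graph g \<Longrightarrow> graph_iso g (ed w) \<longleftrightarrow> (\<exists>f. ed_enum g w f)"
  unfolding graph_iso_def ed_enum_def ed_def by auto

context nd_enum
begin

lemma image: "f ` nodes g = {0..<length w}"
  using bij by (simp add: bij_betw_def)

lemma has_out_iff: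
  assumes u: "u \<in> nodes g"
  shows "has_out g u \<longleftrightarrow> Suc (f u) < length w"
proof
  assume "has_out g u"
  then obtain e v where "(u, e, v) \<in> edges g"
    by (auto simp: has_out_def)
  then show "Suc (f u) < length w"
    using edge_iff[OF u] wf_graph_edgeD[OF wf] by blast
next
  assume succ: "Suc (f u) < length w"
  then obtain v where "v \<in> nodes g" "f v = Suc (f u)"
    using image by (metis atLeastLessThan_iff imageE zero_le)
  then show "has_out g u"
    using edge_iff[OF u] succ unfolding has_out_def by blast
qed

lemma nodes_eq_empty_iff: "nodes g = {} \<longleftrightarrow> w = []"
  using image by auto

lemma sink_unique:
  assumes "w \<noteq> []"
  shows "\<exists>!t. t \<in> nodes g \<and> \<not> has_out g t"
proof -
  have "length w - 1 \<in> f ` nodes g"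
    using image assms by auto
  then obtain t where t: "t \<in> nodes g" "f t = length w - 1"
    by auto
  moreover have "u = v" if "u \<in> nodes g" "v \<in> nodes g" "\<not> has_out g u" "\<not> has_out g v" for u v
  proof -
    have "f u < length w" "f v < length w"
      using that image by auto
    then have "f u = f v"
      using that has_out_iff by simp
    then show ?thesis
      using bij that by (metis bij_betw_def inj_onD)
  qed
  ultimately show ?thesis
    using has_out_iff[OF t(1)] by (metis Suc_pred' assms length_greater_0_conv less_irrefl)
qed

lemma graph_iso_ed_of_nd:
  assumes t: "t \<notin> nodes g"
  shows "graph_iso (ed_of_nd t g) (ed w)"
proof -
  define f' where "f' = f(t := length w)"
  have "ed_enum (ed_of_nd t g) w f'"
  proof
    show "wf_graph (ed_of_nd t g)"
      using wf by (rule wf_ed_of_nd)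
    show "bij_betw f' (nodes (ed_of_nd t g)) {0..length w}"
      unfolding f'_def nodes_ed_of_nd using bij t by (rule bij_betw_fun_upd_insert)
  next
    fix a b e assume a: "a \<in> nodes (ed_of_nd t g)" and b: "b \<in> nodes (ed_of_nd t g)"
    have no_edge_from_t: "(t, e', v) \<notin> edges g" for e' v
      using t wf_graph_edgeD[OF wf] by blast
    show "(a, e, b) \<in> edges (ed_of_nd t g) \<longleftrightarrow> f' b = Suc (f' a) \<and> f' a < length w \<and> e = w ! f' a"
    proof (cases "a = t")
      case True
      then show ?thesis
        using t no_edge_from_t by (simp add: f'_def edges_ed_of_nd_iff)
    next
      case False
      then have a': "a \<in> nodes g" and fa: "f' a = f a" "f a < length w"
        using a image by (auto simp: f'_def)
      show ?thesis
      proof (cases "b = t")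
        case True
        then show ?thesis
          using t a' fa has_out_iff[OF a'] lab[OF a'] wf_graph_edgeD[OF wf]
          by (auto simp: f'_def edges_ed_of_nd_iff)
      next
        case False
        then have b': "b \<in> nodes g" and fb: "f' b = f b" "f b < length w"
          using b image by (auto simp: f'_def)
        then show ?thesis
          using False edge_iff[OF a' b'] fa lab[OF a'] by (auto simp: edges_ed_of_nd_iff)
      qed
    qed
  qed
  then show ?thesis
    using graph_iso_ed_iff wf_ed_of_nd[OF wf] by blast
qed

end

context ed_enum
begin

lemma image: "f ` nodes g = {0..length w}"
  using bij by (simp add: bij_betw_def)

lemma successor:
  assumes u: "u \<in> nodes g" and fu: "f u < length w"
  obtains v where "v \<in> nodes g" "f v = Suc (f u)" "(u, w ! f u, v) \<in> edges g"
proof -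
  have "Suc (f u) \<in> f ` nodes g"
    using image fu by auto
  then show ?thesis
    using that edge_iff[OF u] fu by auto
qed

lemma has_out_iff:
  assumes u: "u \<in> nodes g"
  shows "has_out g u \<longleftrightarrow> f u < length w"
proof
  assume "has_out g u"
  then obtain e v where uv: "(u, e, v) \<in> edges g"
    by (auto simp: has_out_def)
  then have "v \<in> nodes g"
    using wf_graph_edgeD[OF wf] by blast
  then show "f u < length w"
    using edge_iff[OF u] uv by simp
next
  assume "f u < length w"
  then show "has_out g u"
    by (rule successor[OF u]) (auto simp: has_out_def)
qed

lemma out_unique: "out_unique g"
  unfolding out_unique_def
proof (intro allI impI)
  fix u e v e' v' assume e: "(u, e, v) \<in> edges g" and e': "(u, e', v') \<in> edges g"
  have nodes: "u \<in> nodes g" "v \<in> nodes g" "v' \<in> nodes g"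
    using wf_graph_edgeD[OF wf e] wf_graph_edgeD[OF wf e'] by auto
  then have "f v = f v'" "e = e'"
    using edge_iff[of u v e] edge_iff[of u v' e'] e e' by auto
  then show "e = e' \<and> v = v'"
    using bij nodes by (metis bij_betw_def inj_onD)
qed

lemma path_shaped: "path_shaped g"
proof -
  have "length w \<in> f ` nodes g"
    using image by auto
  then obtain t where t: "t \<in> nodes g" "f t = length w"
    by auto
  have "u = t" if u: "u \<in> nodes g" "\<not> has_out g u" for u
  proof -
    have "f u \<in> {0..length w}"
      using u image by blast
    moreover have "\<not> f u < length w"
      using u has_out_iff by simp
    ultimately have "f u = f t"
      using t by simp
    then show ?thesis
      using bij u t by (metis bij_betw_def inj_onD)
  qed
  moreover have "\<not> has_out g t"
    using has_out_iff t by simp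
  ultimately show ?thesis
    unfolding path_shaped_def using t out_unique by blast
qed

lemma graph_iso_nd_of_ed: "graph_iso (nd_of_ed g) (nd w)"
proof -
  have nodes': "nodes (nd_of_ed g) = {u \<in> nodes g. f u < length w}"
    using has_out_iff by auto
  have "nd_enum (nd_of_ed g) w f"
  proof
    show "wf_graph (nd_of_ed g)"
      using wf by (rule wf_nd_of_ed)
    have "f ` nodes (nd_of_ed g) = {i \<in> f ` nodes g. i < length w}"
      unfolding nodes' by auto
    also have "\<dots> = {0..<length w}"
      unfolding image by auto
    finally have image': "f ` nodes (nd_of_ed g) = {0..<length w}" .
    show "bij_betw f (nodes (nd_of_ed g)) {0..<length w}"
      by (rule bij_betw_subset[OF bij _ image']) auto
  next
    fix v assume "v \<in> nodes (nd_of_ed g)"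
    then have "v \<in> nodes g" "f v < length w"
      unfolding nodes' by auto
    then obtain y where "(v, w ! f v, y) \<in> edges g"
      by (rule successor)
    then show "w ! f v = lab (nd_of_ed g) v"
      using lab_nd_of_ed[OF out_unique] by metis
  next
    fix u v e assume u: "u \<in> nodes (nd_of_ed g)" and v: "v \<in> nodes (nd_of_ed g)"
    then have "(u, e, v) \<in> edges (nd_of_ed g) \<longleftrightarrow> (\<exists>e'. (u, e', v) \<in> edges g)"
      by (simp add: edges_nd_of_ed_iff)
    also have "\<dots> \<longleftrightarrow> f v = Suc (f u) \<and> Suc (f u) < length w"
      using u v edge_iff unfolding nodes' by auto
    finally show "(u, e, v) \<in> edges (nd_of_ed g) \<longleftrightarrow> f v = Suc (f u) \<and> Suc (f u) < length w" .
  qed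
  then show ?thesis
    using graph_iso_nd_iff wf_nd_of_ed[OF wf] by blast
qed

end

lemma has_out_nd_of_ed_iff:
  assumes uniq: "out_unique g" and uv: "(u, e, v) \<in> edges g"
  shows "has_out (nd_of_ed g) u \<longleftrightarrow> has_out g v"
proof
  assume "has_out (nd_of_ed g) u"
  then obtain e' v' where "has_out g v'" "(u, e', v') \<in> edges g"
    by (auto simp: has_out_def edges_nd_of_ed_iff)
  then show "has_out g v"
    using out_uniqueD[OF uniq uv] by blast
next
  assume "has_out g v"
  moreover have "has_out g u"
    using uv by (auto simp: has_out_def)
  ultimately show "has_out (nd_of_ed g) u"
    using uv by (auto simp: has_out_def edges_nd_of_ed_iff)
qed

lemma ed_of_nd_nd_of_ed:
  fixes g :: "('v, unit, 'a) graph"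
  assumes wf: "wf_graph g" and shaped: "path_shaped g" and t: "t \<in> nodes g" "\<not> has_out g t"
  shows "ed_of_nd t (nd_of_ed g) = g"
proof (rule graph.equality)
  have uniq: "out_unique g" and sink: "\<And>u. u \<in> nodes g \<Longrightarrow> \<not> has_out g u \<Longrightarrow> u = t"
    using shaped t unfolding path_shaped_def by auto
  show "nodes (ed_of_nd t (nd_of_ed g)) = nodes g"
    using t sink by (simp only: nodes_ed_of_nd nodes_nd_of_ed) blast
  have "(u, e, v) \<in> edges (ed_of_nd t (nd_of_ed g)) \<longleftrightarrow> (u, e, v) \<in> edges g" for u e v
  proof
    assume "(u, e, v) \<in> edges (ed_of_nd t (nd_of_ed g))"
    then have e: "e = lab (nd_of_ed g) u"
      and uv: "(u, (), v) \<in> edges (nd_of_ed g) \<or> v = t \<and> has_out g u \<and> \<not> has_out (nd_of_ed g) u"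
      by (auto simp: edges_ed_of_nd_iff)
    then obtain e' v' where uv': "(u, e', v') \<in> edges g"
      by (auto simp: edges_nd_of_ed_iff has_out_def)
    have "v' = v"
      using uv has_out_nd_of_ed_iff[OF uniq uv'] sink wf_graph_edgeD[OF wf uv'] out_uniqueD[OF uniq uv']
      by (auto simp: edges_nd_of_ed_iff)
    then show "(u, e, v) \<in> edges g"
      using e uv' lab_nd_of_ed[OF uniq uv'] by simp
  next
    assume uv: "(u, e, v) \<in> edges g"
    then have "(u, (), v) \<in> edges (nd_of_ed g) \<or> v = t \<and> u \<in> nodes (nd_of_ed g) \<and> \<not> has_out (nd_of_ed g) u"
      using has_out_nd_of_ed_iff[OF uniq uv] sink wf_graph_edgeD[OF wf uv]
      by (auto simp: edges_nd_of_ed_iff has_out_def)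
    then show "(u, e, v) \<in> edges (ed_of_nd t (nd_of_ed g))"
      using lab_nd_of_ed[OF uniq uv] by (simp add: edges_ed_of_nd_iff)
  qed
  then show "edges (ed_of_nd t (nd_of_ed g)) = edges g"
    by auto
  show "lab (ed_of_nd t (nd_of_ed g)) = lab g"
    by (simp add: ed_of_nd_def fun_eq_iff)
qed simp

text \<open>Not an equality: outside the nodes, the labels of \<open>nd_of_ed\<close> are arbitrary.\<close>

lemma graph_iso_nd_of_ed_ed_of_nd:
  assumes wf: "wf_graph g" and t: "t \<notin> nodes g"
  shows "graph_iso (nd_of_ed (ed_of_nd t g)) g"
proof -
  have no_edge_at_t: "(t, e, v) \<notin> edges g" "(v, e, t) \<notin> edges g" for e v
    using t wf_graph_edgeD[OF wf] by blast+
  have out: "(u, lab g u, if has_out g u then SOME v. (u, (), v) \<in> edges g else t) \<in> edges (ed_of_nd t g)"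
    if "u \<in> nodes g" for u
    using that by (auto simp: edges_ed_of_nd_iff has_out_def intro: someI)
  have has_out_iff: "has_out (ed_of_nd t g) u \<longleftrightarrow> u \<in> nodes g" for u
    using out no_edge_at_t wf_graph_edgeD[OF wf] unfolding has_out_def
    by (auto simp: edges_ed_of_nd_iff)
  have lab: "lab (nd_of_ed (ed_of_nd t g)) u = lab g u" if "u \<in> nodes g" for u
    using out[OF that] unfolding nd_of_ed_def by (auto simp: edges_ed_of_nd_iff)
  have nodes: "nodes (nd_of_ed (ed_of_nd t g)) = nodes g"
    using has_out_iff by auto
  show ?thesis
    unfolding graph_iso_def nodes
    using has_out_iff lab t by (intro exI[of _ id]) (auto simp: edges_nd_of_ed_iff edges_ed_of_nd_iff)
qed

lemma path_shaped_if_graph_iso_ed: "wf_graph g \<Longrightarrow> graph_iso g (ed w) \<Longrightarrow> path_shaped g"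
  using graph_iso_ed_iff ed_enum.path_shaped by blast

lemma graph_iso_nd_of_ed_iff:
  assumes wf: "wf_graph g" and shaped: "path_shaped g"
  shows "graph_iso (nd_of_ed g) (nd w) \<longleftrightarrow> graph_iso g (ed w)"
proof
  assume "graph_iso (nd_of_ed g) (nd w)"
  then obtain f where "nd_enum (nd_of_ed g) w f"
    using graph_iso_nd_iff wf_nd_of_ed[OF wf] by blast
  moreover obtain t where "t \<in> nodes g" "\<not> has_out g t"
    using shaped unfolding path_shaped_def by blast
  ultimately show "graph_iso g (ed w)"
    using nd_enum.graph_iso_ed_of_nd ed_of_nd_nd_of_ed[OF wf shaped] by fastforce
next
  assume "graph_iso g (ed w)"
  then show "graph_iso (nd_of_ed g) (nd w)"
    using graph_iso_ed_iff[OF wf] ed_enum.graph_iso_nd_of_ed by blast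
qed

lemma graph_iso_ed_of_nd_iff:
  assumes wf: "wf_graph g" and t: "t \<notin> nodes g"
  shows "graph_iso (ed_of_nd t g) (ed w) \<longleftrightarrow> graph_iso g (nd w)"
proof
  assume "graph_iso (ed_of_nd t g) (ed w)"
  then obtain f where "ed_enum (ed_of_nd t g) w f"
    using graph_iso_ed_iff wf_ed_of_nd[OF wf] by blast
  then have "graph_iso (nd_of_ed (ed_of_nd t g)) (nd w)"
    by (rule ed_enum.graph_iso_nd_of_ed)
  then show "graph_iso g (nd w)"
    by (rule graph_iso_trans[OF graph_iso_sym[OF graph_iso_nd_of_ed_ed_of_nd[OF wf t]]])
next
  assume "graph_iso g (nd w)"
  then obtain f where "nd_enum g w f"
    using graph_iso_nd_iff[OF wf] by blast
  then show "graph_iso (ed_of_nd t g) (ed w)"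
    using t by (rule nd_enum.graph_iso_ed_of_nd)
qed

lemma graph_iso_nd_Nil_iff: "nodes g = {} \<Longrightarrow> graph_iso g (nd z) \<longleftrightarrow> z = []"
  unfolding graph_iso_def nd_def by (auto simp: bij_betw_def)

lemma mso_definable_nd_rel_iff:
  "mso_definable (nd_rel m) \<longleftrightarrow> (\<exists>T. wf_trans T \<and> (\<forall>g :: (nat, 'a, unit) graph. wf_graph g \<longrightarrow>
     (sat0 g (tdom T) \<longleftrightarrow> (\<exists>w z. (w, z) \<in> m \<and> graph_iso g (nd w))) \<and>
     (\<forall>w z. (w, z) \<in> m \<longrightarrow> graph_iso g (nd w) \<longrightarrow> graph_iso (apply_trans T g) (nd (z :: 'b list)))))"
proof -
  have "(\<exists>(g0, h)\<in>nd_rel m. graph_iso g g0) \<longleftrightarrow> (\<exists>w z. (w, z) \<in> m \<and> graph_iso g (nd w))"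
    for g :: "(nat, 'a, unit) graph"
    unfolding nd_rel_def by auto
  moreover have "(\<forall>(g0, h)\<in>nd_rel m. P g0 h) \<longleftrightarrow> (\<forall>w z. (w, z) \<in> m \<longrightarrow> P (nd w) (nd z))" for P
    unfolding nd_rel_def by auto
  ultimately show ?thesis
    unfolding mso_definable_def by (simp only:)
qed

lemma mso_definable_ed_rel_iff:
  "mso_definable (ed_rel m) \<longleftrightarrow> (\<exists>T. wf_trans T \<and> (\<forall>g :: (nat, unit, 'a) graph. wf_graph g \<longrightarrow>
     (sat0 g (tdom T) \<longleftrightarrow> (\<exists>w z. (w, z) \<in> m \<and> graph_iso g (ed w))) \<and>
     (\<forall>w z. (w, z) \<in> m \<longrightarrow> graph_iso g (ed w) \<longrightarrow> graph_iso (apply_trans T g) (ed (z :: 'b list)))))"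
proof -
  have "(\<exists>(g0, h)\<in>ed_rel m. graph_iso g g0) \<longleftrightarrow> (\<exists>w z. (w, z) \<in> m \<and> graph_iso g (ed w))"
    for g :: "(nat, unit, 'a) graph"
    unfolding ed_rel_def by auto
  moreover have "(\<forall>(g0, h)\<in>ed_rel m. P g0 h) \<longleftrightarrow> (\<forall>w z. (w, z) \<in> m \<longrightarrow> P (ed w) (ed z))" for P
    unfolding ed_rel_def by auto
  ultimately show ?thesis
    unfolding mso_definable_def by (simp only:)
qed

lemma Nil_output_if_mso_definable_nd_rel:
  assumes "mso_definable (nd_rel m)" and "([], z) \<in> m"
  shows "z = []"
proof -
  obtain T where out: "\<And>g w z. wf_graph (g :: (nat, 'a, unit) graph) \<Longrightarrow> (w, z) \<in> m \<Longrightarrow>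
      graph_iso g (nd w) \<Longrightarrow> graph_iso (apply_trans T g) (nd z)"
    using assms(1) unfolding mso_definable_nd_rel_iff by blast
  have "graph_iso (apply_trans T (nd [])) (nd z)"
    by (rule out[OF wf_nd assms(2) graph_iso_refl])
  moreover have "nodes (apply_trans T (nd [])) = {}"
    by (simp add: out_nodes_empty nd_def)
  ultimately show ?thesis
    using graph_iso_nd_Nil_iff by blast
qed

section \<open>Node-labelled transductions induce edge-labelled ones\<close>

text \<open>Quantifiers range over the nodes with an outgoing edge, i.e. the nodes of \<open>nd_of_ed g\<close>,
  and a node label is read off the outgoing edge.\<close>

fun relativize :: "('a::finite, unit) mso \<Rightarrow> ('l, 'a) mso" where
  "relativize (Lab s x) = Ex1 (Suc x) (Edg s x (Suc x))"
| "relativize (Edg e x y) = Conj (Big_Disj (map (\<lambda>e. Edg e x y) univ_list)) (Has_Out y)"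
| "relativize (Eq x y) = Eq x y"
| "relativize (In x X) = In x X"
| "relativize (Neg p) = Neg (relativize p)"
| "relativize (Conj p q) = Conj (relativize p) (relativize q)"
| "relativize (Ex1 x p) = Ex1 x (Conj (Has_Out x) (relativize p))"
| "relativize (Ex2 X p) = Ex2 X (Conj (Neg (Ex1 0 (Conj (In 0 X) (Neg (Has_Out 0))))) (relativize p))"

lemma fv_relativize: "fv1 (relativize p) \<subseteq> fv1 p" "fv2 (relativize p) \<subseteq> fv2 p"
  by (induction p) auto

lemma sat_relativize:
  assumes wf: "wf_graph g" and uniq: "out_unique g"
    and "\<forall>x\<in>fv1 p. I x \<in> nodes (nd_of_ed g)" and "\<forall>X\<in>fv2 p. S X \<subseteq> nodes (nd_of_ed g)"
  shows "sat g I S (relativize p) \<longleftrightarrow> sat (nd_of_ed g) I S p"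
  using assms(3,4)
proof (induction p arbitrary: I S)
  case (Lab s x)
  then obtain e v where ev: "(I x, e, v) \<in> edges g"
    by (auto simp: has_out_def)
  have "sat g I S (relativize (Lab s x)) \<longleftrightarrow> (\<exists>v'. (I x, s, v') \<in> edges g)"
    using wf_graph_edgeD[OF wf] by auto
  also have "\<dots> \<longleftrightarrow> s = e"
    using ev out_uniqueD[OF uniq ev] by blast
  finally show ?case
    using lab_nd_of_ed[OF uniq ev] by auto
next
  case (Edg e x y)
  then show ?case
    by (auto simp: sat_Has_Out[OF wf] edges_nd_of_ed_iff)
next
  case (Conj p q)
  have "sat g I S (relativize p) \<longleftrightarrow> sat (nd_of_ed g) I S p"
    "sat g I S (relativize q) \<longleftrightarrow> sat (nd_of_ed g) I S q"
    by (rule Conj.IH; use Conj.prems in auto)+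
  then show ?case by simp
next
  case (Ex1 x p)
  have "sat g (I(x := v)) S (relativize p) \<longleftrightarrow> sat (nd_of_ed g) (I(x := v)) S p"
    if "v \<in> nodes (nd_of_ed g)" for v
    by (rule Ex1.IH) (use Ex1.prems that in auto)
  then show ?case
    by (auto simp: sat_Has_Out[OF wf])
next
  case (Ex2 X p)
  have "sat g I (S(X := V)) (relativize p) \<longleftrightarrow> sat (nd_of_ed g) I (S(X := V)) p"
    if "V \<subseteq> nodes (nd_of_ed g)" for V
    by (rule Ex2.IH) (use Ex2.prems that in auto)
  moreover have "V \<subseteq> nodes g \<and> (\<forall>v\<in>nodes g. v \<in> V \<longrightarrow> has_out g v) \<longleftrightarrow> V \<subseteq> nodes (nd_of_ed g)" for V
    by auto
  ultimately show ?case
    by (simp add: sat_Has_Out[OF wf]) (metis (no_types, lifting))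
qed simp_all

lemma sat1_relativize:
  assumes "wf_graph g" and "out_unique g" and "fv1 p \<subseteq> {0}" and "fv2 p = {}"
    and "u \<in> nodes (nd_of_ed g)"
  shows "sat1 g (relativize p) u \<longleftrightarrow> sat1 (nd_of_ed g) p u"
  unfolding sat1_def using assms by (intro sat_relativize) auto

lemma sat2_relativize:
  assumes "wf_graph g" and "out_unique g" and "fv1 p \<subseteq> {0, 1}" and "fv2 p = {}"
    and "u \<in> nodes (nd_of_ed g)" and "v \<in> nodes (nd_of_ed g)"
  shows "sat2 g (relativize p) u v \<longleftrightarrow> sat2 (nd_of_ed g) p u v"
  unfolding sat2_def using assms by (intro sat_relativize) auto

lemma sat2_relativize_eq_sat1:
  assumes "wf_graph g" and "out_unique g" and "fv1 p \<subseteq> {0}" and "fv2 p = {}"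
    and "u \<in> nodes (nd_of_ed g)"
  shows "sat2 g (relativize p) u v \<longleftrightarrow> sat1 (nd_of_ed g) p u"
proof -
  have "sat2 g (relativize p) u v \<longleftrightarrow> sat1 g (relativize p) u"
    using assms(3,4) fv_relativize[of p] by (intro sat2_eq_sat1) auto
  also have "\<dots> \<longleftrightarrow> sat1 (nd_of_ed g) p u"
    using assms by (intro sat1_relativize)
  finally show ?thesis .
qed

definition Path_Shape :: "('l, 'a::finite) mso" where
  "Path_Shape =
     Conj (Ex1 0 (Conj (Neg (Has_Out 0)) (All1 1 (Imp (Neg (Has_Out 1)) (Eq 1 0)))))
          (All1 0 (All1 1 (All1 2 (Big_Conj
            [Imp (Conj (Edg e 0 1) (Edg e' 0 2)) (if e = e' then Eq 1 2 else FF).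
               e \<leftarrow> univ_list, e' \<leftarrow> univ_list]))))"

lemma closed_Path_Shape: "closed Path_Shape"
  unfolding closed_def Path_Shape_def by (auto split: if_splits)

lemma sat_Path_Shape:
  assumes wf: "wf_graph g"
  shows "sat g I S Path_Shape \<longleftrightarrow> path_shaped g"
proof -
  have sink: "sat g I S (Ex1 0 (Conj (Neg (Has_Out 0)) (All1 1 (Imp (Neg (Has_Out 1)) (Eq 1 0)))))
      \<longleftrightarrow> (\<exists>!t. t \<in> nodes g \<and> \<not> has_out g t)"
    by (auto simp: sat_Has_Out[OF wf])
  have "sat g I S (All1 0 (All1 1 (All1 2 (Big_Conj
        [Imp (Conj (Edg e 0 1) (Edg e' 0 2)) (if e = e' then Eq 1 2 else FF). e \<leftarrow> univ_list, e' \<leftarrow> univ_list]))))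
      \<longleftrightarrow> (\<forall>u\<in>nodes g. \<forall>v\<in>nodes g. \<forall>v'\<in>nodes g. \<forall>e e'.
             (u, e, v) \<in> edges g \<longrightarrow> (u, e', v') \<in> edges g \<longrightarrow> e = e' \<and> v = v')"
    by (simp split: if_splits) blast
  also have "\<dots> \<longleftrightarrow> out_unique g"
    unfolding out_unique_def using wf_graph_edgeD[OF wf] by blast
  finally show ?thesis
    unfolding Path_Shape_def path_shaped_def using sink by (simp only: sat.simps)
qed

definition fresh_copy :: "('l1, 'e1, 'l2, 'e2) mso_trans \<Rightarrow> nat" where
  "fresh_copy T = Suc (Max (insert 0 (copies T)))"

lemma fresh_copy_notin:
  assumes "wf_trans T"
  shows "fresh_copy T \<notin> copies T"
proof
  assume "fresh_copy T \<in> copies T"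
  moreover have "finite (copies T)"
    using assms by (simp add: wf_trans_def)
  ultimately have "fresh_copy T \<le> Max (insert 0 (copies T))"
    by (intro Max_ge) auto
  then show False
    by (simp add: fresh_copy_def)
qed

definition ed_trans :: "('a::finite, unit, 'b::finite, unit) mso_trans \<Rightarrow> ('l, 'a, unit, 'b) mso_trans" where
  "ed_trans T =
     \<lparr> tdom = Conj Path_Shape (relativize (tdom T)),
       copies = insert (fresh_copy T) (copies T),
       nform = (\<lambda>c _. if c \<in> copies T then Conj (Has_Out 0) (relativize (Out_Node T c))
                      else if c = fresh_copy T then Neg (Has_Out 0) else FF),
       eform = (\<lambda>c1 c2 e.
         if c1 \<in> copies T \<and> c2 \<in> copies T then
           Conj (Has_Out 0) (Conj (Has_Out 1) (relativize (Conj (eform T c1 c2 ()) (nform T c1 e))))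
         else if c1 \<in> copies T \<and> c2 = fresh_copy T then
           Conj (Neg (Has_Out 1)) (Conj (Has_Out 0) (relativize (Conj (nform T c1 e) (Neg (Out_Edge T c1 ())))))
         else FF) \<rparr>"

lemma copies_ed_trans: "copies (ed_trans T) = insert (fresh_copy T) (copies T)"
  by (simp add: ed_trans_def)

lemma wf_ed_trans:
  assumes T: "wf_trans T"
  shows "wf_trans (ed_trans T)"
proof -
  have "closed (tdom (ed_trans T))"
    using T closed_Path_Shape fv_relativize[of "tdom T"]
    by (auto simp: ed_trans_def closed_def wf_trans_def)
  moreover have "finite (copies (ed_trans T))"
    using T by (simp add: ed_trans_def wf_trans_def)
  moreover have "fv1 (nform (ed_trans T) c s) \<subseteq> {0} \<and> fv2 (nform (ed_trans T) c s) = {}" for c s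
    using fv_relativize[of "Out_Node T c"] fv_Out_Node[OF T, of c] by (auto simp: ed_trans_def)
  moreover have "fv1 (eform (ed_trans T) c1 c2 e) \<subseteq> {0, 1} \<and> fv2 (eform (ed_trans T) c1 c2 e) = {}"
    for c1 c2 e
    using fv_relativize[of "Conj (eform T c1 c2 ()) (nform T c1 e)"]
      fv_relativize[of "Conj (nform T c1 e) (Neg (Out_Edge T c1 ()))"]
      wf_trans_eformD[OF T, of c1 c2 "()"] wf_trans_nformD[OF T, of c1 e] fv_Out_Edge[OF T, of c1 "()"]
    by (auto simp: ed_trans_def)
  ultimately show ?thesis
    unfolding wf_trans_def by blast
qed

context
  fixes T :: "('a::finite, unit, 'b::finite, unit) mso_trans" and g :: "('v, 'l, 'a) graph"
  assumes T: "wf_trans T" and wf: "wf_graph g" and uniq: "out_unique g"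
begin

lemma sat1_nform_ed_trans:
  assumes u: "u \<in> nodes g" and c: "c \<in> copies T"
  shows "sat1 g (nform (ed_trans T) c s) u \<longleftrightarrow> (u, c) \<in> out_nodes T (nd_of_ed g)"
proof (cases "has_out g u")
  case True
  then have u': "u \<in> nodes (nd_of_ed g)"
    using u by simp
  have "sat1 g (nform (ed_trans T) c s) u \<longleftrightarrow> sat1 g (relativize (Out_Node T c)) u"
    using c True by (simp add: ed_trans_def sat1_def sat_Has_Out[OF wf])
  also have "\<dots> \<longleftrightarrow> sat1 (nd_of_ed g) (Out_Node T c) u"
    using fv_Out_Node[OF T] by (intro sat1_relativize[OF wf uniq _ _ u']) auto
  also have "\<dots> \<longleftrightarrow> (u, c) \<in> out_nodes T (nd_of_ed g)"
    using u' c by (simp add: sat1_def sat_Out_Node[OF T] out_nodes_iff)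
  finally show ?thesis .
next
  case False
  then show ?thesis
    using c by (simp add: ed_trans_def sat1_def sat_Has_Out[OF wf] out_nodes_iff)
qed

lemma sat1_nform_ed_trans_fresh: "sat1 g (nform (ed_trans T) (fresh_copy T) s) u \<longleftrightarrow> \<not> has_out g u"
  using fresh_copy_notin[OF T] by (simp add: ed_trans_def sat1_Has_Out[OF wf])

lemma out_nodes_ed_trans:
  assumes t: "t \<in> nodes g" "\<not> has_out g t" and sink: "\<And>u. u \<in> nodes g \<Longrightarrow> \<not> has_out g u \<Longrightarrow> u = t"
  shows "out_nodes (ed_trans T) g = insert (t, fresh_copy T) (out_nodes T (nd_of_ed g))"
proof (intro set_eqI)
  fix x :: "'v \<times> nat"
  obtain u c where x: "x = (u, c)"
    by (cases x)
  have "(u, c) \<in> out_nodes (ed_trans T) g \<longleftrightarrow>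
      u \<in> nodes g \<and> c \<in> insert (fresh_copy T) (copies T) \<and> sat1 g (nform (ed_trans T) c ()) u"
    by (simp add: out_nodes_iff Ex1_unit_iff copies_ed_trans)
  also have "\<dots> \<longleftrightarrow> (u, c) \<in> insert (t, fresh_copy T) (out_nodes T (nd_of_ed g))"
  proof (cases "c \<in> copies T")
    case True
    then show ?thesis
      using fresh_copy_notin[OF T] sat1_nform_ed_trans[OF _ True] by (auto simp: out_nodes_iff)
  next
    case False
    have "u \<in> nodes g \<and> \<not> has_out g u \<longleftrightarrow> u = t"
      using t sink by blast
    then show ?thesis
      using False sat1_nform_ed_trans_fresh by (auto simp: out_nodes_iff)
  qed
  finally show "x \<in> out_nodes (ed_trans T) g \<longleftrightarrow> x \<in> insert (t, fresh_copy T) (out_nodes T (nd_of_ed g))"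
    unfolding x .
qed

lemma sat2_eform_ed_trans:
  assumes u: "(u, c1) \<in> out_nodes T (nd_of_ed g)" and v: "(v, c2) \<in> out_nodes T (nd_of_ed g)"
  shows "sat2 g (eform (ed_trans T) c1 c2 e) u v \<longleftrightarrow>
    ((u, c1), (), (v, c2)) \<in> edges (apply_trans T (nd_of_ed g)) \<and> lab (apply_trans T (nd_of_ed g)) (u, c1) = e"
proof -
  have u': "u \<in> nodes (nd_of_ed g)" "c1 \<in> copies T" and v': "v \<in> nodes (nd_of_ed g)" "c2 \<in> copies T"
    using u v by (auto simp: out_nodes_iff)
  have "sat2 g (eform (ed_trans T) c1 c2 e) u v \<longleftrightarrow>
      sat2 g (relativize (eform T c1 c2 ())) u v \<and> sat2 g (relativize (nform T c1 e)) u v"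
    using u' v' by (simp add: ed_trans_def sat2_Has_Out[OF wf])
  also have "sat2 g (relativize (eform T c1 c2 ())) u v \<longleftrightarrow> sat2 (nd_of_ed g) (eform T c1 c2 ()) u v"
    using wf_trans_eformD[OF T] u' v' by (intro sat2_relativize[OF wf uniq]) auto
  also have "sat2 g (relativize (nform T c1 e)) u v \<longleftrightarrow> sat1 (nd_of_ed g) (nform T c1 e) u"
    using wf_trans_nformD[OF T] u' by (intro sat2_relativize_eq_sat1[OF wf uniq]) auto
  finally show ?thesis
    using u v by (simp add: edges_apply_trans_iff lab_apply_trans_iff)
qed

lemma sat2_eform_ed_trans_fresh:
  assumes u: "(u, c) \<in> out_nodes T (nd_of_ed g)"
  shows "sat2 g (eform (ed_trans T) c (fresh_copy T) e) u v \<longleftrightarrow>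
    \<not> has_out g v \<and> lab (apply_trans T (nd_of_ed g)) (u, c) = e \<and> \<not> has_out (apply_trans T (nd_of_ed g)) (u, c)"
proof -
  have u': "u \<in> nodes (nd_of_ed g)" "c \<in> copies T"
    using u by (auto simp: out_nodes_iff)
  have "sat2 g (eform (ed_trans T) c (fresh_copy T) e) u v \<longleftrightarrow> \<not> has_out g v \<and>
      sat2 g (relativize (nform T c e)) u v \<and> \<not> sat2 g (relativize (Out_Edge T c ())) u v"
    using u' fresh_copy_notin[OF T] by (simp add: ed_trans_def sat2_Has_Out[OF wf])
  also have "sat2 g (relativize (nform T c e)) u v \<longleftrightarrow> sat1 (nd_of_ed g) (nform T c e) u"
    using wf_trans_nformD[OF T] u' by (intro sat2_relativize_eq_sat1[OF wf uniq]) auto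
  also have "sat2 g (relativize (Out_Edge T c ())) u v \<longleftrightarrow> sat1 (nd_of_ed g) (Out_Edge T c ()) u"
    using fv_Out_Edge[OF T] u' by (intro sat2_relativize_eq_sat1[OF wf uniq]) auto
  finally show ?thesis
    using u by (simp add: lab_apply_trans_iff sat1_Out_Edge[OF T] has_out_def)
qed

lemma edges_apply_trans_ed_trans_iff:
  assumes t: "t \<in> nodes g" "\<not> has_out g t" and sink: "\<And>u. u \<in> nodes g \<Longrightarrow> \<not> has_out g u \<Longrightarrow> u = t"
  shows "(x, e, y) \<in> edges (apply_trans (ed_trans T) g) \<longleftrightarrow>
    (x, e, y) \<in> edges (ed_of_nd (t, fresh_copy T) (apply_trans T (nd_of_ed g)))"
    (is "_ \<in> edges ?A \<longleftrightarrow> _ \<in> edges (ed_of_nd ?t ?H)")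
proof -
  obtain u c1 v c2 where xy: "x = (u, c1)" "y = (v, c2)"
    by (cases x, cases y)
  have t_new: "?t \<notin> nodes ?H"
    using fresh_copy_notin[OF T] by (simp add: out_nodes_iff)
  have from_t: "eform (ed_trans T) (fresh_copy T) c e = FF" for c e
    using fresh_copy_notin[OF T] by (simp add: ed_trans_def)
  have A_edge: "(x, e, y) \<in> edges ?A \<longleftrightarrow>
      x \<in> insert ?t (nodes ?H) \<and> y \<in> insert ?t (nodes ?H) \<and> sat2 g (eform (ed_trans T) c1 c2 e) u v"
    using out_nodes_ed_trans[OF t sink] by (simp add: xy edges_apply_trans_iff)
  have H_edge: "(x, (), y) \<in> edges ?H \<longleftrightarrow>
      x \<in> nodes ?H \<and> y \<in> nodes ?H \<and> sat2 (nd_of_ed g) (eform T c1 c2 ()) u v"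
    by (simp add: xy edges_apply_trans_iff)
  show ?thesis
  proof (cases "x \<in> nodes ?H")
    case x: True
    show ?thesis
    proof (cases "y = ?t")
      case True
      then show ?thesis
        using x t_new t A_edge H_edge sat2_eform_ed_trans_fresh[of u c1 e v]
        by (auto simp: xy edges_ed_of_nd_iff)
    next
      case False
      then show ?thesis
        using x A_edge H_edge sat2_eform_ed_trans[of u c1 v c2 e]
        by (auto simp: xy edges_ed_of_nd_iff)
    qed
  next
    case False
    then show ?thesis
      using A_edge H_edge by (auto simp: xy edges_ed_of_nd_iff from_t)
  qed
qed

lemma apply_trans_ed_trans:
  assumes shaped: "path_shaped g" and t: "t \<in> nodes g" "\<not> has_out g t"
  shows "apply_trans (ed_trans T) g = ed_of_nd (t, fresh_copy T) (apply_trans T (nd_of_ed g))"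
proof (rule graph.equality)
  have sink: "\<And>u. u \<in> nodes g \<Longrightarrow> \<not> has_out g u \<Longrightarrow> u = t"
    using shaped t unfolding path_shaped_def by blast
  show "nodes (apply_trans (ed_trans T) g) = nodes (ed_of_nd (t, fresh_copy T) (apply_trans T (nd_of_ed g)))"
    using out_nodes_ed_trans[OF t sink] by simp
  show "edges (apply_trans (ed_trans T) g) = edges (ed_of_nd (t, fresh_copy T) (apply_trans T (nd_of_ed g)))"
    using edges_apply_trans_ed_trans_iff[OF t sink] by auto
  show "lab (apply_trans (ed_trans T) g) = lab (ed_of_nd (t, fresh_copy T) (apply_trans T (nd_of_ed g)))"
    by (simp add: ed_of_nd_def fun_eq_iff)
qed simp

end

lemma sat0_tdom_ed_trans:
  assumes T: "wf_trans T" and wf: "wf_graph g"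
  shows "sat0 g (tdom (ed_trans T)) \<longleftrightarrow> path_shaped g \<and> sat0 (nd_of_ed g) (tdom T)"
proof -
  have closed: "closed (tdom T)" "closed (tdom (ed_trans T))"
    using T wf_ed_trans[OF T] unfolding wf_trans_def by auto
  have "sat0 g (tdom (ed_trans T)) \<longleftrightarrow> path_shaped g \<and> sat g I (\<lambda>_. {}) (relativize (tdom T))" for I
    using sat0_iff_sat[OF closed(2), of g I] by (simp add: ed_trans_def sat_Path_Shape[OF wf])
  moreover have "sat g I (\<lambda>_. {}) (relativize (tdom T)) \<longleftrightarrow> sat0 (nd_of_ed g) (tdom T)"
    if "out_unique g" for I
    using closed(1) sat0_iff_sat[OF closed(1)] by (subst sat_relativize[OF wf that]) (auto simp: closed_def)
  ultimately show ?thesis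
    unfolding path_shaped_def by blast
qed

lemma graph_iso_apply_trans_ed_trans:
  assumes T: "wf_trans T" and wf: "wf_graph g" and iso: "graph_iso g (ed w)"
    and iso_out: "graph_iso (apply_trans T (nd_of_ed g)) (nd z)"
  shows "graph_iso (apply_trans (ed_trans T) g) (ed z)"
proof -
  have shaped: "path_shaped g"
    using path_shaped_if_graph_iso_ed[OF wf iso] .
  then obtain t where t: "t \<in> nodes g" "\<not> has_out g t"
    unfolding path_shaped_def by blast
  have "(t, fresh_copy T) \<notin> nodes (apply_trans T (nd_of_ed g))"
    using fresh_copy_notin[OF T] by (simp add: out_nodes_iff)
  then have "graph_iso (ed_of_nd (t, fresh_copy T) (apply_trans T (nd_of_ed g))) (ed z)"
    using iso_out graph_iso_ed_of_nd_iff[OF wf_apply_trans[OF wf_nd_of_ed[OF wf] T]] by simp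
  then show ?thesis
    using apply_trans_ed_trans[OF T wf _ shaped t] shaped by (simp add: path_shaped_def)
qed

lemma mso_definable_ed_rel_if_nd_rel:
  fixes m :: "('a::finite list \<times> 'b::finite list) set"
  assumes "mso_definable (nd_rel m)"
  shows "mso_definable (ed_rel m)"
proof -
  obtain T :: "('a, unit, 'b, unit) mso_trans" where T: "wf_trans T"
    and dom: "\<And>g :: (nat, 'a, unit) graph. wf_graph g \<Longrightarrow>
      sat0 g (tdom T) \<longleftrightarrow> (\<exists>w z. (w, z) \<in> m \<and> graph_iso g (nd w))"
    and out: "\<And>(g :: (nat, 'a, unit) graph) w z. wf_graph g \<Longrightarrow> (w, z) \<in> m \<Longrightarrow>
      graph_iso g (nd w) \<Longrightarrow> graph_iso (apply_trans T g) (nd z)"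
    using assms unfolding mso_definable_nd_rel_iff by blast
  show ?thesis
    unfolding mso_definable_ed_rel_iff
  proof (intro exI conjI allI impI)
    show "wf_trans (ed_trans T)"
      using T by (rule wf_ed_trans)
    fix g :: "(nat, unit, 'a) graph" assume wf: "wf_graph g"
    have "sat0 g (tdom (ed_trans T)) \<longleftrightarrow>
        path_shaped g \<and> (\<exists>w z. (w, z) \<in> m \<and> graph_iso (nd_of_ed g) (nd w))"
      using sat0_tdom_ed_trans[OF T wf] dom[OF wf_nd_of_ed[OF wf]] by simp
    also have "\<dots> \<longleftrightarrow> (\<exists>w z. (w, z) \<in> m \<and> graph_iso g (ed w))"
      using graph_iso_nd_of_ed_iff[OF wf] path_shaped_if_graph_iso_ed[OF wf] by auto
    finally show "sat0 g (tdom (ed_trans T)) \<longleftrightarrow> (\<exists>w z. (w, z) \<in> m \<and> graph_iso g (ed w))" .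
    fix w z assume wz: "(w, z) \<in> m" and iso: "graph_iso g (ed w)"
    then have "graph_iso (nd_of_ed g) (nd w)"
      using graph_iso_nd_of_ed_iff[OF wf path_shaped_if_graph_iso_ed[OF wf iso]] by blast
    then show "graph_iso (apply_trans (ed_trans T) g) (ed z)"
      using graph_iso_apply_trans_ed_trans[OF T wf iso] out[OF wf_nd_of_ed[OF wf] wz] by blast
  qed
qed

section \<open>Edge-labelled transductions induce node-labelled ones\<close>

text \<open>\<open>\<kappa> x\<close> records that the node variable \<open>x\<close> denotes the end node \<open>t\<close> of \<open>ed_of_nd t g\<close>,
  \<open>\<sigma> X\<close> that the set variable \<open>X\<close> contains \<open>t\<close>.\<close>

fun elim_node :: "(nat \<Rightarrow> bool) \<Rightarrow> (nat \<Rightarrow> bool) \<Rightarrow> (unit, 'a::finite) mso \<Rightarrow> ('a, unit) mso" where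
  "elim_node \<kappa> \<sigma> (Lab s x) = TT"
| "elim_node \<kappa> \<sigma> (Edg e x y) =
     (if \<kappa> x then FF else if \<kappa> y then Conj (Lab e x) (Neg (Has_Out x)) else Conj (Edg () x y) (Lab e x))"
| "elim_node \<kappa> \<sigma> (Eq x y) = (if \<kappa> x \<and> \<kappa> y then TT else if \<kappa> x \<or> \<kappa> y then FF else Eq x y)"
| "elim_node \<kappa> \<sigma> (In x X) = (if \<kappa> x then (if \<sigma> X then TT else FF) else In x X)"
| "elim_node \<kappa> \<sigma> (Neg p) = Neg (elim_node \<kappa> \<sigma> p)"
| "elim_node \<kappa> \<sigma> (Conj p q) = Conj (elim_node \<kappa> \<sigma> p) (elim_node \<kappa> \<sigma> q)"
| "elim_node \<kappa> \<sigma> (Ex1 x p) = Disj (Ex1 x (elim_node (\<kappa>(x := False)) \<sigma> p)) (elim_node (\<kappa>(x := True)) \<sigma> p)"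
| "elim_node \<kappa> \<sigma> (Ex2 X p) = Ex2 X (Disj (elim_node \<kappa> (\<sigma>(X := False)) p) (elim_node \<kappa> (\<sigma>(X := True)) p))"

lemma fv_elim_node:
  "fv1 (elim_node \<kappa> \<sigma> p) \<subseteq> {x \<in> fv1 p. \<not> \<kappa> x} \<and> fv2 (elim_node \<kappa> \<sigma> p) \<subseteq> fv2 p"
proof (induction p arbitrary: \<kappa> \<sigma>)
  case (Ex1 x p)
  have "fv1 (elim_node (\<kappa>(x := b)) \<sigma> p) \<subseteq> {y \<in> fv1 p. \<not> (\<kappa>(x := b)) y}"
    "fv2 (elim_node (\<kappa>(x := b)) \<sigma> p) \<subseteq> fv2 p" for b
    using Ex1.IH by blast+
  moreover have "{y \<in> fv1 p. \<not> (\<kappa>(x := False)) y} - {x} \<subseteq> {y \<in> fv1 p - {x}. \<not> \<kappa> y}"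
    "{y \<in> fv1 p. \<not> (\<kappa>(x := True)) y} \<subseteq> {y \<in> fv1 p - {x}. \<not> \<kappa> y}"
    by auto
  ultimately show ?case
    by (simp only: elim_node.simps fv_Disj fv1.simps fv2.simps) blast
next
  case (Ex2 X p)
  have "fv1 (elim_node \<kappa> (\<sigma>(X := b)) p) \<subseteq> {y \<in> fv1 p. \<not> \<kappa> y}"
    "fv2 (elim_node \<kappa> (\<sigma>(X := b)) p) \<subseteq> fv2 p" for b
    using Ex2.IH by blast+
  then show ?case
    by (simp only: elim_node.simps fv_Disj fv1.simps fv2.simps) blast
next
  case (Conj p q)
  show ?case
    using Conj.IH[of \<kappa> \<sigma>] by auto
next
  case (Neg p)
  show ?case
    using Neg.IH[of \<kappa> \<sigma>] by auto
qed auto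

lemma ex_subset_insert_iff:
  "(\<exists>W. W \<subseteq> insert t A \<and> P W) \<longleftrightarrow> (\<exists>V. V \<subseteq> A \<and> (\<exists>b. P (if b then insert t V else V)))"
proof
  assume "\<exists>W. W \<subseteq> insert t A \<and> P W"
  then obtain W where W: "W \<subseteq> insert t A" "P W"
    by blast
  have "W - {t} \<subseteq> A"
    using W(1) by blast
  moreover have "P (if t \<in> W then insert t (W - {t}) else W - {t})"
    using W(2) by (cases "t \<in> W") (simp_all add: insert_absorb)
  ultimately show "\<exists>V. V \<subseteq> A \<and> (\<exists>b. P (if b then insert t V else V))"
    by blast
next
  assume "\<exists>V. V \<subseteq> A \<and> (\<exists>b. P (if b then insert t V else V))"
  then obtain V b where "V \<subseteq> A" "P (if b then insert t V else V)"
    by blast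
  then show "\<exists>W. W \<subseteq> insert t A \<and> P W"
    by (intro exI[of _ "if b then insert t V else V"]) auto
qed

lemma sat_elim_node:
  assumes wf: "wf_graph g" and t: "t \<notin> nodes g"
    and "\<forall>x\<in>fv1 p. if \<kappa> x then I' x = t else I' x = I x \<and> I x \<in> nodes g"
    and "\<forall>X\<in>fv2 p. S X \<subseteq> nodes g \<and> S' X = (if \<sigma> X then insert t (S X) else S X)"
  shows "sat g I S (elim_node \<kappa> \<sigma> p) \<longleftrightarrow> sat (ed_of_nd t g) I' S' p"
  using assms(3,4)
proof (induction p arbitrary: \<kappa> \<sigma> I I' S S')
  case (Edg e x y)
  have "(t, e', v) \<notin> edges g" "(v, e', t) \<notin> edges g" for e' v
    using wf_graph_edgeD[OF wf] t by blast+
  then show ?case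
    using Edg.prems t by (auto simp: edges_ed_of_nd_iff sat_Has_Out[OF wf])
next
  case (Conj p q)
  show ?case
    using Conj.IH[of \<kappa> I' I S S' \<sigma>] Conj.prems by auto
next
  case (Ex1 x p)
  have "sat g (I(x := v)) S (elim_node (\<kappa>(x := False)) \<sigma> p) \<longleftrightarrow> sat (ed_of_nd t g) (I'(x := v)) S' p"
    if "v \<in> nodes g" for v
    by (rule Ex1.IH) (use Ex1.prems that in auto)
  moreover have "sat g I S (elim_node (\<kappa>(x := True)) \<sigma> p) \<longleftrightarrow> sat (ed_of_nd t g) (I'(x := t)) S' p"
    by (rule Ex1.IH) (use Ex1.prems in auto)
  ultimately show ?case
    by auto
next
  case (Ex2 X p)
  have IH: "sat g I (S(X := V)) (elim_node \<kappa> (\<sigma>(X := b)) p) \<longleftrightarrow>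
      sat (ed_of_nd t g) I' (S'(X := if b then insert t V else V)) p" if "V \<subseteq> nodes g" for V b
    by (rule Ex2.IH) (use Ex2.prems that in auto)
  have "sat g I S (elim_node \<kappa> \<sigma> (Ex2 X p)) \<longleftrightarrow>
      (\<exists>V. V \<subseteq> nodes g \<and> (\<exists>b. sat g I (S(X := V)) (elim_node \<kappa> (\<sigma>(X := b)) p)))"
    by (simp add: ex_bool_eq disj_commute)
  also have "\<dots> \<longleftrightarrow>
      (\<exists>V. V \<subseteq> nodes g \<and> (\<exists>b. sat (ed_of_nd t g) I' (S'(X := if b then insert t V else V)) p))"
    by (rule ex_cong1) (use IH in blast)
  also have "\<dots> \<longleftrightarrow> sat (ed_of_nd t g) I' S' (Ex2 X p)"
    unfolding sat.simps nodes_ed_of_nd by (rule ex_subset_insert_iff[symmetric])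
  finally show ?case .
next
  case (Eq x y)
  show ?case
    using Eq.prems t by (cases "\<kappa> x"; cases "\<kappa> y") auto
next
  case (In x X)
  show ?case
    using In.prems t by (cases "\<kappa> x"; cases "\<sigma> X") auto
qed (simp_all add: ed_of_nd_def)

text \<open>Copy \<open>2c\<close> of a node \<open>u\<close> simulates copy \<open>c\<close> of \<open>u\<close>, copy \<open>2c + 1\<close> of the last node simulates
  copy \<open>c\<close> of the end node \<open>t\<close> of \<open>ed_of_nd t g\<close>.\<close>

definition nd_trans :: "(unit, 'a::finite, unit, 'b::finite) mso_trans \<Rightarrow> ('a, unit, 'b, unit) mso_trans" where
  "nd_trans T =
     \<lparr> tdom = elim_node (\<lambda>_. False) (\<lambda>_. False) (tdom T),
       copies = {a. a div 2 \<in> copies T},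
       nform = (\<lambda>a s. if a div 2 \<in> copies T then
                  if even a then elim_node (\<lambda>_. False) (\<lambda>_. False) (Out_Label T (a div 2) s)
                  else Conj (Neg (Has_Out 0)) (elim_node (\<lambda>x. x = 0) (\<lambda>_. False) (Out_Label T (a div 2) s))
                else FF),
       eform = (\<lambda>a1 a2 _. if a1 div 2 \<in> copies T \<and> a2 div 2 \<in> copies T then
                  elim_node (\<lambda>x. x = 0 \<and> odd a1 \<or> x = 1 \<and> odd a2) (\<lambda>_. False)
                    (Big_Disj (map (eform T (a1 div 2) (a2 div 2)) univ_list))
                else FF) \<rparr>"

definition represented :: "'v \<Rightarrow> 'v \<times> nat \<Rightarrow> 'v \<times> nat" where
  "represented t x = (if odd (snd x) then t else fst x, snd x div 2)"

lemma represented_Pair [simp]: "represented t (u, a) = (if odd a then t else u, a div 2)"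
  by (simp add: represented_def)

lemma copies_nd_trans [simp]: "a \<in> copies (nd_trans T) \<longleftrightarrow> a div 2 \<in> copies T"
  by (simp add: nd_trans_def)

lemma wf_nd_trans:
  assumes T: "wf_trans T"
  shows "wf_trans (nd_trans T)"
proof -
  have "closed (tdom (nd_trans T))"
    using T fv_elim_node[of "\<lambda>_. False" "\<lambda>_. False" "tdom T"]
    by (auto simp: nd_trans_def closed_def wf_trans_def)
  moreover have "a \<in> (\<lambda>c. 2 * c) ` copies T \<union> (\<lambda>c. 2 * c + 1) ` copies T" if "a div 2 \<in> copies T" for a
    using that by (cases "even a") (auto simp: image_iff elim!: evenE oddE)
  then have "finite (copies (nd_trans T))"
    using T by (auto simp: nd_trans_def wf_trans_def intro: finite_subset[of _ "_ \<union> _"])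
  moreover have "fv1 (nform (nd_trans T) a s) \<subseteq> {0} \<and> fv2 (nform (nd_trans T) a s) = {}" for a s
    using fv_elim_node[of "\<lambda>_. False" "\<lambda>_. False" "Out_Label T (a div 2) s"]
      fv_elim_node[of "\<lambda>x. x = 0" "\<lambda>_. False" "Out_Label T (a div 2) s"]
      fv_Out_Label[OF T, of "a div 2" s]
    by (auto simp: nd_trans_def)
  moreover have "fv1 (eform (nd_trans T) a1 a2 e) \<subseteq> {0, 1} \<and> fv2 (eform (nd_trans T) a1 a2 e) = {}"
    for a1 a2 e
  proof -
    let ?p = "Big_Disj (map (eform T (a1 div 2) (a2 div 2)) univ_list)"
      and ?\<kappa> = "\<lambda>x. x = 0 \<and> odd a1 \<or> x = 1 \<and> odd a2"
    have "fv1 ?p \<subseteq> {0, 1}" "fv2 ?p = {}"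
      using wf_trans_eformD[OF T] by auto
    then have "fv1 (elim_node ?\<kappa> (\<lambda>_. False) ?p) \<subseteq> {0, 1}" "fv2 (elim_node ?\<kappa> (\<lambda>_. False) ?p) = {}"
      using fv_elim_node[of ?\<kappa> "\<lambda>_. False" ?p] by blast+
    then show ?thesis
      by (simp add: nd_trans_def)
  qed
  ultimately show ?thesis
    unfolding wf_trans_def by blast
qed

context
  fixes T :: "(unit, 'a::finite, unit, 'b::finite) mso_trans" and g :: "('v, 'a, unit) graph" and t :: 'v
  assumes T: "wf_trans T" and wf: "wf_graph g" and t: "t \<notin> nodes g"
begin

lemma sat1_nform_nd_trans:
  assumes u: "u \<in> nodes g" and a: "a div 2 \<in> copies T"
  shows "sat1 g (nform (nd_trans T) a s) u \<longleftrightarrow>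
    (odd a \<longrightarrow> \<not> has_out g u) \<and> (\<exists>b. (represented t (u, a), s, b) \<in> edges (apply_trans T (ed_of_nd t g)))"
proof -
  let ?E = "ed_of_nd t g" and ?p = "Out_Label T (a div 2) s"
  have "sat1 g (nform (nd_trans T) a s) u \<longleftrightarrow> (odd a \<longrightarrow> \<not> has_out g u) \<and> sat1 ?E ?p (fst (represented t (u, a)))"
  proof (cases "even a")
    case True
    have "sat g (\<lambda>_. u) (\<lambda>_. {}) (elim_node (\<lambda>_. False) (\<lambda>_. False) ?p) \<longleftrightarrow> sat ?E (\<lambda>_. u) (\<lambda>_. {}) ?p"
      by (rule sat_elim_node[OF wf t]) (use u in auto)
    then show ?thesis
      using True a by (simp add: nd_trans_def sat1_def represented_def)
  next
    case False
    have "nform (nd_trans T) a s = Conj (Neg (Has_Out 0)) (elim_node (\<lambda>x. x = 0) (\<lambda>_. False) ?p)"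
      using False a by (simp add: nd_trans_def)
    moreover have "sat1 g (elim_node (\<lambda>x. x = 0) (\<lambda>_. False) ?p) u \<longleftrightarrow>
        sat ?E (\<lambda>x. if x = 0 then t else u) (\<lambda>_. {}) ?p"
      unfolding sat1_def by (rule sat_elim_node[OF wf t]) (use u in auto)
    moreover have "\<dots> \<longleftrightarrow> sat1 ?E ?p t"
      using fv_Out_Label[OF T] by (subst sat_eq_sat1) auto
    ultimately show ?thesis
      using False by (simp add: sat1_Has_Out[OF wf] represented_def)
  qed
  also have "sat1 ?E ?p (fst (represented t (u, a))) \<longleftrightarrow>
      (\<exists>b. ((fst (represented t (u, a)), a div 2), s, b) \<in> edges (apply_trans T ?E))"
    using u a by (intro sat1_Out_Label[OF T]) (auto simp: represented_def)
  finally show ?thesis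
    by (simp add: represented_def)
qed

lemma sat2_eform_nd_trans:
  assumes u: "u \<in> nodes g" and v: "v \<in> nodes g"
    and a: "a1 div 2 \<in> copies T" "a2 div 2 \<in> copies T"
  shows "sat2 g (eform (nd_trans T) a1 a2 e) u v \<longleftrightarrow>
    (\<exists>s. sat2 (ed_of_nd t g) (eform T (a1 div 2) (a2 div 2) s)
      (fst (represented t (u, a1))) (fst (represented t (v, a2))))"
proof -
  let ?I = "\<lambda>i :: nat. if i = 0 then u else v"
    and ?p = "Big_Disj (map (eform T (a1 div 2) (a2 div 2)) univ_list)"
    and ?\<kappa> = "\<lambda>x. x = 0 \<and> odd a1 \<or> x = 1 \<and> odd a2"
  have fv: "fv1 ?p \<subseteq> {0, 1}" "fv2 ?p = {}"
    using wf_trans_eformD[OF T] by auto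
  have "sat2 g (eform (nd_trans T) a1 a2 e) u v \<longleftrightarrow> sat g ?I (\<lambda>_. {}) (elim_node ?\<kappa> (\<lambda>_. False) ?p)"
    using a by (simp add: nd_trans_def sat2_def)
  also have "\<dots> \<longleftrightarrow> sat (ed_of_nd t g) (\<lambda>x. if ?\<kappa> x then t else ?I x) (\<lambda>_. {}) ?p"
    by (rule sat_elim_node[OF wf t]) (use u v in auto)
  also have "\<dots> \<longleftrightarrow> sat2 (ed_of_nd t g) ?p (fst (represented t (u, a1))) (fst (represented t (v, a2)))"
    using sat_eq_sat2[OF fv, of "ed_of_nd t g" "\<lambda>x. if ?\<kappa> x then t else ?I x"]
    by (simp add: represented_def)
  also have "\<dots> \<longleftrightarrow> (\<exists>s. sat2 (ed_of_nd t g) (eform T (a1 div 2) (a2 div 2) s)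
      (fst (represented t (u, a1))) (fst (represented t (v, a2))))"
    unfolding sat2_def by simp
  finally show ?thesis .
qed

lemma out_nodes_nd_trans_iff:
  assumes uniq: "out_unique (apply_trans T (ed_of_nd t g))"
  shows "(u, a) \<in> out_nodes (nd_trans T) g \<longleftrightarrow> u \<in> nodes g \<and> (odd a \<longrightarrow> \<not> has_out g u) \<and>
    represented t (u, a) \<in> nodes (nd_of_ed (apply_trans T (ed_of_nd t g)))"
    (is "_ \<longleftrightarrow> _ \<and> _ \<and> ?x \<in> nodes (nd_of_ed ?H)")
proof -
  have label_unique: "(\<exists>!s. \<exists>b. (?x, s, b) \<in> edges ?H) \<longleftrightarrow> has_out ?H ?x"
    using out_uniqueD[OF uniq] unfolding has_out_def by blast
  have "wf_graph ?H"
    by (rule wf_apply_trans[OF wf_ed_of_nd[OF wf] T])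
  then have in_nodes: "has_out ?H ?x \<Longrightarrow> ?x \<in> nodes ?H"
    using wf_graph_edgeD unfolding has_out_def by metis
  then have "?x \<in> nodes (nd_of_ed ?H) \<longleftrightarrow> has_out ?H ?x"
    by auto
  moreover have "a div 2 \<in> copies T" if "?x \<in> nodes ?H"
    using that by (auto simp: out_nodes_def represented_def)
  moreover have "(\<exists>!s. sat1 g (nform (nd_trans T) a s) u) \<longleftrightarrow> (odd a \<longrightarrow> \<not> has_out g u) \<and> has_out ?H ?x"
    if "u \<in> nodes g" "a div 2 \<in> copies T"
  proof -
    have "(\<exists>!s. sat1 g (nform (nd_trans T) a s) u) \<longleftrightarrow>
        (\<exists>!s. (odd a \<longrightarrow> \<not> has_out g u) \<and> (\<exists>b. (?x, s, b) \<in> edges ?H))"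
      using sat1_nform_nd_trans[OF that] by (simp del: represented_Pair)
    also have "\<dots> \<longleftrightarrow> (odd a \<longrightarrow> \<not> has_out g u) \<and> (\<exists>!s. \<exists>b. (?x, s, b) \<in> edges ?H)"
      by (cases "odd a \<longrightarrow> \<not> has_out g u") (auto simp del: represented_Pair)
    also have "\<dots> \<longleftrightarrow> (odd a \<longrightarrow> \<not> has_out g u) \<and> has_out ?H ?x"
      using label_unique by (simp del: represented_Pair)
    finally show ?thesis .
  qed
  ultimately show ?thesis
    unfolding out_nodes_iff[of u a] copies_nd_trans using in_nodes by blast
qed

lemma lab_apply_trans_nd_trans:
  assumes uniq: "out_unique (apply_trans T (ed_of_nd t g))"
    and x: "x \<in> out_nodes (nd_trans T) g"
  shows "lab (apply_trans (nd_trans T) g) x = lab (nd_of_ed (apply_trans T (ed_of_nd t g))) (represented t x)"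
proof -
  let ?H = "apply_trans T (ed_of_nd t g)"
  obtain u a where ua: "x = (u, a)"
    by (cases x)
  have u: "u \<in> nodes g" "odd a \<longrightarrow> \<not> has_out g u" and "has_out ?H (represented t x)"
    using x out_nodes_nd_trans_iff[OF uniq] unfolding ua by (auto simp del: represented_Pair)
  then obtain s b where sb: "(represented t x, s, b) \<in> edges ?H"
    by (auto simp: has_out_def)
  have a: "a div 2 \<in> copies T"
    using x by (simp add: ua out_nodes_iff)
  have "sat1 g (nform (nd_trans T) a s) u"
    using sat1_nform_nd_trans[OF u(1) a] u(2) sb unfolding ua by blast
  then have "lab (apply_trans (nd_trans T) g) x = s"
    using lab_apply_trans_iff[of u a "nd_trans T" g s] x unfolding ua by blast
  moreover have "lab (nd_of_ed ?H) (represented t x) = s"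
    by (rule lab_nd_of_ed[OF uniq sb])
  ultimately show ?thesis
    by simp
qed

lemma edges_apply_trans_nd_trans:
  assumes uniq: "out_unique (apply_trans T (ed_of_nd t g))"
    and x: "(u, a1) \<in> out_nodes (nd_trans T) g" and y: "(v, a2) \<in> out_nodes (nd_trans T) g"
  shows "((u, a1), e, (v, a2)) \<in> edges (apply_trans (nd_trans T) g) \<longleftrightarrow>
    (represented t (u, a1), e, represented t (v, a2)) \<in> edges (nd_of_ed (apply_trans T (ed_of_nd t g)))"
proof -
  let ?H = "apply_trans T (ed_of_nd t g)"
  have u: "u \<in> nodes g" "represented t (u, a1) \<in> nodes (nd_of_ed ?H)"
    and v: "v \<in> nodes g" "represented t (v, a2) \<in> nodes (nd_of_ed ?H)"
    using x y out_nodes_nd_trans_iff[OF uniq] by (blast, blast, blast, blast)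
  have a: "a1 div 2 \<in> copies T" "a2 div 2 \<in> copies T"
    using x y by (simp_all add: out_nodes_iff)
  have "((u, a1), e, (v, a2)) \<in> edges (apply_trans (nd_trans T) g) \<longleftrightarrow>
      sat2 g (eform (nd_trans T) a1 a2 e) u v"
    using x y by (simp add: edges_apply_trans_iff)
  also have "\<dots> \<longleftrightarrow> (\<exists>s. sat2 (ed_of_nd t g) (eform T (a1 div 2) (a2 div 2) s)
      (fst (represented t (u, a1))) (fst (represented t (v, a2))))"
    by (rule sat2_eform_nd_trans[OF u(1) v(1) a])
  also have "\<dots> \<longleftrightarrow> (\<exists>s. (represented t (u, a1), s, represented t (v, a2)) \<in> edges ?H)"
    using u(2) v(2) by (simp add: edges_apply_trans_iff)
  also have "\<dots> \<longleftrightarrow> (represented t (u, a1), e, represented t (v, a2)) \<in> edges (nd_of_ed ?H)"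
    using u(2) v(2) by (simp add: edges_nd_of_ed_iff)
  finally show ?thesis .
qed

lemma bij_betw_represented:
  assumes uniq: "out_unique (apply_trans T (ed_of_nd t g))"
    and sink: "\<exists>!s. s \<in> nodes g \<and> \<not> has_out g s"
  shows "bij_betw (represented t) (out_nodes (nd_trans T) g) (nodes (nd_of_ed (apply_trans T (ed_of_nd t g))))"
    (is "bij_betw _ ?O (nodes ?N)")
proof (rule bij_betwI')
  fix x y assume x: "x \<in> ?O" and y: "y \<in> ?O"
  obtain u a1 v a2 where xy: "x = (u, a1)" "y = (v, a2)"
    by (cases x, cases y)
  have "u \<in> nodes g" "odd a1 \<longrightarrow> \<not> has_out g u" "v \<in> nodes g" "odd a2 \<longrightarrow> \<not> has_out g v"
    using x y out_nodes_nd_trans_iff[OF uniq] unfolding xy by blast+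
  then show "represented t x = represented t y \<longleftrightarrow> x = y"
    using t sink unfolding xy by (auto split: if_splits) (metis odd_two_times_div_two_succ dvd_mult_div_cancel)+
next
  fix x assume "x \<in> ?O"
  then show "represented t x \<in> nodes ?N"
    using out_nodes_nd_trans_iff[OF uniq] by (cases x) blast
next
  fix y assume y: "y \<in> nodes ?N"
  obtain v c where vc: "y = (v, c)"
    by (cases y)
  have "v \<in> insert t (nodes g)" "c \<in> copies T"
    using y unfolding vc by (auto simp: out_nodes_iff)
  moreover obtain s where "s \<in> nodes g" "\<not> has_out g s"
    using sink by blast
  ultimately have "(if v = t then (s, 2 * c + 1) else (v, 2 * c)) \<in> ?O \<and>
      y = represented t (if v = t then (s, 2 * c + 1) else (v, 2 * c))"
    using y out_nodes_nd_trans_iff[OF uniq] unfolding vc by auto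
  then show "\<exists>x\<in>?O. y = represented t x"
    by blast
qed

lemma graph_iso_apply_trans_nd_trans_nd_of_ed:
  assumes uniq: "out_unique (apply_trans T (ed_of_nd t g))"
    and sink: "\<exists>!s. s \<in> nodes g \<and> \<not> has_out g s"
  shows "graph_iso (apply_trans (nd_trans T) g) (nd_of_ed (apply_trans T (ed_of_nd t g)))"
  unfolding graph_iso_def nodes_apply_trans
proof (intro exI[of _ "represented t"] conjI ballI allI)
  show "bij_betw (represented t) (out_nodes (nd_trans T) g) (nodes (nd_of_ed (apply_trans T (ed_of_nd t g))))"
    by (rule bij_betw_represented[OF uniq sink])
  show "lab (nd_of_ed (apply_trans T (ed_of_nd t g))) (represented t x) = lab (apply_trans (nd_trans T) g) x"
    if "x \<in> out_nodes (nd_trans T) g" for x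
    using lab_apply_trans_nd_trans[OF uniq that] by simp
  show "(x, e, y) \<in> edges (apply_trans (nd_trans T) g) \<longleftrightarrow>
      (represented t x, e, represented t y) \<in> edges (nd_of_ed (apply_trans T (ed_of_nd t g)))"
    if "x \<in> out_nodes (nd_trans T) g" "y \<in> out_nodes (nd_trans T) g" for x y e
    using edges_apply_trans_nd_trans[OF uniq] that by (cases x, cases y) blast
qed

lemma graph_iso_apply_trans_nd_trans:
  assumes iso: "graph_iso g (nd w)" and iso_out: "graph_iso (apply_trans T (ed_of_nd t g)) (ed z)"
    and Nil: "w = [] \<Longrightarrow> z = []"
  shows "graph_iso (apply_trans (nd_trans T) g) (nd z)"
proof -
  obtain f where f: "nd_enum g w f"
    using iso graph_iso_nd_iff[OF wf] by blast
  show ?thesis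
  proof (cases "w = []")
    case True
    then have "nodes (apply_trans (nd_trans T) g) = {}"
      using nd_enum.nodes_eq_empty_iff[OF f] by (simp add: out_nodes_empty)
    then show ?thesis
      using graph_iso_nd_Nil_iff Nil True by blast
  next
    case False
    let ?H = "apply_trans T (ed_of_nd t g)"
    have wf_H: "wf_graph ?H"
      using wf_apply_trans[OF wf_ed_of_nd[OF wf] T] .
    have shaped: "path_shaped ?H"
      using path_shaped_if_graph_iso_ed[OF wf_H iso_out] .
    then have "graph_iso (apply_trans (nd_trans T) g) (nd_of_ed ?H)"
      using graph_iso_apply_trans_nd_trans_nd_of_ed nd_enum.sink_unique[OF f False]
      by (simp add: path_shaped_def)
    moreover have "graph_iso (nd_of_ed ?H) (nd z)"
      using iso_out graph_iso_nd_of_ed_iff[OF wf_H shaped] by blast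
    ultimately show ?thesis
      by (rule graph_iso_trans)
  qed
qed

lemma sat0_tdom_nd_trans: "sat0 g (tdom (nd_trans T)) \<longleftrightarrow> sat0 (ed_of_nd t g) (tdom T)"
proof -
  have closed: "closed (tdom T)" "closed (tdom (nd_trans T))"
    using T wf_nd_trans[OF T] unfolding wf_trans_def by auto
  have "sat g (\<lambda>_. t) (\<lambda>_. {}) (elim_node (\<lambda>_. False) (\<lambda>_. False) (tdom T)) \<longleftrightarrow>
      sat (ed_of_nd t g) (\<lambda>_. t) (\<lambda>_. {}) (tdom T)"
    by (rule sat_elim_node[OF wf t]) (use closed(1) in \<open>auto simp: closed_def\<close>)
  moreover have "tdom (nd_trans T) = elim_node (\<lambda>_. False) (\<lambda>_. False) (tdom T)"
    by (simp add: nd_trans_def)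
  ultimately show ?thesis
    using sat0_iff_sat[OF closed(1), of "ed_of_nd t g" "\<lambda>_. t"] sat0_iff_sat[OF closed(2), of g "\<lambda>_. t"]
    by simp
qed

end

lemma mso_definable_nd_rel_if_ed_rel:
  fixes m :: "('a::finite list \<times> 'b::finite list) set"
  assumes "mso_definable (ed_rel m)" and Nil: "\<forall>z. ([], z) \<in> m \<longrightarrow> z = []"
  shows "mso_definable (nd_rel m)"
proof -
  obtain T :: "(unit, 'a, unit, 'b) mso_trans" where T: "wf_trans T"
    and dom: "\<And>g :: (nat, unit, 'a) graph. wf_graph g \<Longrightarrow>
      sat0 g (tdom T) \<longleftrightarrow> (\<exists>w z. (w, z) \<in> m \<and> graph_iso g (ed w))"
    and out: "\<And>(g :: (nat, unit, 'a) graph) w z. wf_graph g \<Longrightarrow> (w, z) \<in> m \<Longrightarrow>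
      graph_iso g (ed w) \<Longrightarrow> graph_iso (apply_trans T g) (ed z)"
    using assms(1) unfolding mso_definable_ed_rel_iff by blast
  show ?thesis
    unfolding mso_definable_nd_rel_iff
  proof (intro exI conjI allI impI)
    show "wf_trans (nd_trans T)"
      using T by (rule wf_nd_trans)
    fix g :: "(nat, 'a, unit) graph" assume wf: "wf_graph g"
    obtain t where t: "t \<notin> nodes g"
      using wf ex_new_if_finite[OF infinite_UNIV_nat] unfolding wf_graph_def by blast
    show "sat0 g (tdom (nd_trans T)) \<longleftrightarrow> (\<exists>w z. (w, z) \<in> m \<and> graph_iso g (nd w))"
      using sat0_tdom_nd_trans[OF T wf t] dom[OF wf_ed_of_nd[OF wf]] graph_iso_ed_of_nd_iff[OF wf t]
      by simp
    fix w z assume wz: "(w, z) \<in> m" and iso: "graph_iso g (nd w)"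
    then have "graph_iso (apply_trans T (ed_of_nd t g)) (ed z)"
      using out[OF wf_ed_of_nd[OF wf] wz] graph_iso_ed_of_nd_iff[OF wf t] by blast
    then show "graph_iso (apply_trans (nd_trans T) g) (nd z)"
      using graph_iso_apply_trans_nd_trans[OF T wf t iso] Nil wz by blast
  qed
qed

theorem lemma3p9:
  fixes m :: "('a::finite list \<times> 'b::finite list) set"
  shows "mso_definable (nd_rel m) \<longleftrightarrow>
           (mso_definable (ed_rel m) \<and> (\<forall>z. ([], z) \<in> m \<longrightarrow> z = []))"
proof
  assume "mso_definable (nd_rel m)"
  then show "mso_definable (ed_rel m) \<and> (\<forall>z. ([], z) \<in> m \<longrightarrow> z = [])"
    using mso_definable_ed_rel_if_nd_rel Nil_output_if_mso_definable_nd_rel by blast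
next
  assume "mso_definable (ed_rel m) \<and> (\<forall>z. ([], z) \<in> m \<longrightarrow> z = [])"
  then show "mso_definable (nd_rel m)"
    using mso_definable_nd_rel_if_ed_rel by blast
qed

end
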